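(* Assume the hypotheses of the convergence theorem for SREDA: (H1), (H2), (H3), $\lambda_{T,k}=0$ for all $k$ and $\lambda_{t,k}\to0$ as $k\to\infty$ for $t<T$. Fix $t\in\{2,\ldots,T\}$ and a node $n\in\mathrm{Nodes}(t-1)$, and let $\mathcal{S}_n=\{k\ge1: n_{t-1}^k=n\}$ be the set of iterations whose sampled scenario passes through $n$. If almost surely $\lim_{k\to+\infty,\,k\in\mathcal{S}_n}\big(\mathcal{Q}_t(x_n^k)-\mathcal{Q}_t^k(x_n^k)\big)=0$, then almost surely $\lim_{k\to+\infty,\,k\notin\mathcal{S}_n}\big(\mathcal{Q}_t(x_n^k)-\mathcal{Q}_t^k(x_n^k)\big)=0$.
   Context: Stages $t=1,\ldots,T$; $x_0\in\mathbb{R}^n$ given, $\mathcal{X}_0:=\{x_0\}$. Random data process $(\xi_t)$: $\xi_1$ deterministic; (H1): $(\xi_t)$ is interstage independent and for $t=2,\ldots,T$, $\xi_t$ is a random vector in $\mathbb{R}^K$ with finite support $\Theta_t=\{\xi_{t,1},\ldots,\xi_{t,M}\}$; the components of $\xi_t$ include the entries of $(b_t,A_t,B_t)$. $X_t(x_{t-1},\xi_t)=\{x_t\in\mathcal{X}_t: g_t(x_{t-1},x_t,\xi_t)\le0,\ A_tx_t+B_tx_{t-1}=b_t\}$. $\mathcal{Q}_{T+1}\equiv0$; $\mathfrak{Q}_t(x_{t-1},\xi_t)=\inf\{f_t(x_{t-1},x_t,\xi_t)+\mathcal{Q}_{t+1}(x_t): x_t\in X_t(x_{t-1},\xi_t)\}$;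 $\mathcal{Q}_t(x_{t-1})=\mathbb{E}[\mathfrak{Q}_t(x_{t-1},\xi_t)]$, $t=2,\ldots,T$. $\mathcal{X}^\varepsilon:=\mathcal{X}+\varepsilon\mathbb{B}_n$. (H2), for $t=1,\ldots,T$: 1) $\mathcal{X}_t$ nonempty convex compact; 2) $f_t(x_{t-1},x_t,\cdot)$ measurable and each $f_t(\cdot,\cdot,\xi_{t,j})$ proper convex lsc; 3) each component of $g_t(\cdot,\cdot,\xi_{t,j})$ convex lsc; 4) there is $\varepsilon>0$ such that for each $j$, $\mathcal{X}_{t-1}^\varepsilon\times\mathcal{X}_t\subset\mathrm{dom}\,f_t(\cdot,\cdot,\xi_{t,j})$ and $X_t(x_{t-1},\xi_{t,j})\ne\emptyset$ for all $x_{t-1}\in\mathcal{X}_{t-1}^\varepsilon$; 5) if $t\ge2$, for each $j$ there is $(\bar y,\bar x)\in(\mathcal{X}_{t-1}\times\mathrm{ri}(\mathcal{X}_t))\cap\mathrm{ri}(\{g_t(\cdot,\cdot,\xi_{t,j})\le0\})$ with $\bar x\in X_t(\bar y,\xi_{t,j})$. Scenario tree: root $n_0$ (stage 0) with one child $n_1$ (stage 1, $\xi_{n_1}=\xi_1$); each stage-$(t-1)$ node has $M$ children $m$, one per $\xi_{t,j}$, with $\xi_m=\xi_{t,j}$, $p_m=\mathbb{P}(\xi_t=\xi_{t,j})$; $\mathrm{Nodes}(t)$, $C(n)$ as usual. SREDA: initial $\mathcal{Q}_t^0\le\mathcal{Q}_t$, $\mathcal{Q}_{T+1}^k\equiv0$;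 nonnegative $\lambda_{t,k}$ with $\lambda_{t,1}=\lambda_{T,k}=0$; prox-centers $x_t^{P,k}\in\mathcal{X}_t$. Iteration $k\ge1$: Forward pass: $x_{n_0}^k=x_0$; for $t=1,\ldots,T$, all nodes $n$ of stage $t-1$ and $m\in C(n)$, $x_m^k$ solves $\min\{f_t(x_n^k,x_m,\xi_m)+\mathcal{Q}_{t+1}^{k-1}(x_m)+\lambda_{t,k}\|x_m-x_t^{P,k}\|^2:x_m\in X_t(x_n^k,\xi_m)\}$. Backward pass: select nodes $(n_1^k,\ldots,n_T^k)$, $n_1^k=n_1$, $n_t^k\in C(n_{t-1}^k)$, corresponding to a sample $(\xi_1^k,\ldots,\xi_T^k)$; for $t=T,\ldots,2$ with $n=n_{t-1}^k$, for $m\in C(n)$ compute $\underline{\mathfrak{Q}}_t^k(x_n^k,\xi_m)=\inf\{f_t(x_n^k,x_m,\xi_m)+\mathcal{Q}_{t+1}^k(x_m):x_m\in X_t(x_n^k,\xi_m)\}$ and a subgradient $\pi_m^k$ of $\underline{\mathfrak{Q}}_t^k(\cdot,\xi_m)$ at $x_n^k$; $\theta_t^k=\sum_mp_m\underline{\mathfrak{Q}}_t^k(x_n^k,\xi_m)$, $\beta_t^k=\sum_mp_m\pi_m^k$, $\mathcal{C}_t^k(y)=\theta_t^k+\langle\beta_t^k,y-x_n^k\rangle$, $\mathcal{Q}_t^k=\max\{\mathcal{Q}_t^{k-1},\mathcal{C}_t^k\}$. (H3): for every $j$, $t=2,\ldots,T$, $k\ge1$, $\mathbb{P}(\xi_t^k=\xi_{t,j})=\mathbb{P}(\xi_t=\xi_{t,j})>0$,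 and $\xi_t^k$ is independent of $\sigma(\xi_2^1,\ldots,\xi_T^1,\ldots,\xi_2^{k-1},\ldots,\xi_T^{k-1},\xi_2^k,\ldots,\xi_{t-1}^k)$. *)

theory Defs
  imports "HOL-Analysis.Analysis" "HOL-Probability.Probability"
begin

definition fatten :: "'a::real_normed_vector set \<Rightarrow> real \<Rightarrow> 'a set" where
  "fatten X e = (\<Union>y\<in>X. cball y e)"

definition edom :: "('a \<Rightarrow> ereal) \<Rightarrow> 'a set" where
  "edom F = {z. F z < \<infinity>}"

definition proper_ef :: "('a \<Rightarrow> ereal) \<Rightarrow> bool" where
  "proper_ef F \<longleftrightarrow> (\<forall>z. F z \<noteq> -\<infinity>) \<and> (\<exists>z. F z \<noteq> \<infinity>)"

definition convex_ef :: "('a::real_vector \<Rightarrow> ereal) \<Rightarrow> bool" where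
  "convex_ef F \<longleftrightarrow> (\<forall>y z u. 0 < u \<and> u < 1 \<longrightarrow>
      F (u *\<^sub>R y + (1 - u) *\<^sub>R z) \<le> ereal u * F y + ereal (1 - u) * F z)"

definition lsc_ef :: "('a::topological_space \<Rightarrow> ereal) \<Rightarrow> bool" where
  "lsc_ef F \<longleftrightarrow> (\<forall>c::real. closed {z. F z \<le> ereal c})"

definition is_subgrad :: "('a::real_inner \<Rightarrow> ereal) \<Rightarrow> 'a \<Rightarrow> 'a \<Rightarrow> bool" where
  "is_subgrad F y \<pi> \<longleftrightarrow> \<bar>F y\<bar> \<noteq> \<infinity> \<and> (\<forall>z. F y + ereal (\<pi> \<bullet> (z - y)) \<le> F z)"

definition feas :: "(nat \<Rightarrow> 'a::real_inner set) \<Rightarrow> (nat \<Rightarrow> nat \<Rightarrow> 'a \<Rightarrow> 'a \<Rightarrow> 'xi \<Rightarrow> real)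
    \<Rightarrow> (nat \<Rightarrow> nat) \<Rightarrow> (nat \<Rightarrow> nat \<Rightarrow> 'xi \<Rightarrow> 'a) \<Rightarrow> (nat \<Rightarrow> nat \<Rightarrow> 'xi \<Rightarrow> 'a)
    \<Rightarrow> (nat \<Rightarrow> nat \<Rightarrow> 'xi \<Rightarrow> real) \<Rightarrow> (nat \<Rightarrow> nat) \<Rightarrow> nat \<Rightarrow> 'a \<Rightarrow> 'xi \<Rightarrow> 'a set" where
  "feas Xs g ng Ar Br bv nr t xprev \<xi> =
     {z \<in> Xs t. (\<forall>i<ng t. g t i xprev z \<xi> \<le> 0) \<and>
               (\<forall>i<nr t. Ar t i \<xi> \<bullet> z + Br t i \<xi> \<bullet> xprev = bv t i \<xi>)}"

definition Qinf :: "(nat \<Rightarrow> 'a \<Rightarrow> 'a \<Rightarrow> 'xi \<Rightarrow> ereal) \<Rightarrow> (nat \<Rightarrow> 'a \<Rightarrow> 'xi \<Rightarrow> 'a set)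
    \<Rightarrow> ('a \<Rightarrow> ereal) \<Rightarrow> nat \<Rightarrow> 'a \<Rightarrow> 'xi \<Rightarrow> ereal" where
  "Qinf f Xf F t y \<xi> = (INF z\<in>Xf t y \<xi>. f t y z \<xi> + F z)"

(* Scenario tree: the stage-s node (s >= 1) is encoded as the list of length s-1 of the
   indices j of the realizations xi_{2,j}, ..., xi_{s,j} along the path from n_1. *)
definition tree_nodes :: "nat \<Rightarrow> nat \<Rightarrow> nat list set" where
  "tree_nodes M s = {m. length m = s - 1 \<and> set m \<subseteq> {..<M}}"

definition node_xi :: "'xi \<Rightarrow> (nat \<Rightarrow> nat \<Rightarrow> 'xi) \<Rightarrow> nat list \<Rightarrow> 'xi" where
  "node_xi xi1 xi m = (if m = [] then xi1 else xi (length m + 1) (last m))"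

definition Theta :: "'xi \<Rightarrow> (nat \<Rightarrow> nat \<Rightarrow> 'xi) \<Rightarrow> nat \<Rightarrow> nat \<Rightarrow> 'xi set" where
  "Theta xi1 xi M t = (if t = 1 then {xi1} else xi t ` {..<M})"

(* n_s^k: node of stage s selected in the backward pass of iteration k;
   J k r \<omega> is the index j with xi_r^k = xi_{r,j} *)
definition sampled_node :: "(nat \<Rightarrow> nat \<Rightarrow> 'w \<Rightarrow> nat) \<Rightarrow> nat \<Rightarrow> nat \<Rightarrow> 'w \<Rightarrow> nat list" where
  "sampled_node J k s \<omega> = map (\<lambda>r. J k r \<omega>) [2..<Suc s]"

definition samples_agree :: "(nat \<Rightarrow> nat \<Rightarrow> 'w \<Rightarrow> nat) \<Rightarrow> nat \<Rightarrow> nat \<Rightarrow> 'w \<Rightarrow> 'w \<Rightarrow> bool" where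
  "samples_agree J T k \<omega> \<omega>' \<longleftrightarrow> (\<forall>k'\<in>{1..<k}. \<forall>s\<in>{2..T}. J k' s \<omega> = J k' s \<omega>')"

end

theory Submission
  imports Defs
begin

text \<open>Write \<open>y\<^sub>k = x\<^sub>n\<^sup>k\<close> and \<open>g\<^sub>k = Q\<^sub>t(y\<^sub>k) - Q\<^sub>t\<^sup>k(y\<^sub>k) \<ge> 0\<close>.
  The cost-to-go \<open>Q\<^sub>t\<close> is finite and convex near \<open>X\<^sub>t\<^sub>-\<^sub>1\<close>, hence uniformly continuous on it,
  and along every trajectory the slopes of the stage-\<open>t\<close> cuts are bounded.
  Suppose \<open>g\<^sub>k \<ge> e\<close> for infinitely many \<open>k \<notin> S\<^sub>n\<close>. By compactness infinitely many of these
  iterates lie in one small ball, so infinitely often the previous model has a gap \<open>\<ge> e\<close> at an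
  iterate in that ball. Whether this happens is decided by the samples drawn before the iteration,
  while the sampled path passes through \<open>n\<close> with the fixed probability \<open>\<Prod> p > 0\<close> independently
  of them; a conditional Borel--Cantelli argument then shows that almost surely it also happens
  infinitely often at iterations in \<open>S\<^sub>n\<close>. There the gap is small, so the new cut is active at the
  iterate; cuts are never removed and have bounded slope, so the gap stays small on the whole ball,
  contradicting \<open>g\<^sub>k \<ge> e\<close> at later iterations.\<close>

section \<open>Extended-real convexity\<close>

lemma ereal_le_mult_INF_add:
  fixes X c :: ereal and g :: "'b \<Rightarrow> ereal"
  assumes u: "0 < u" and c: "c \<noteq> -\<infinity>" and le: "\<And>z. z \<in> S \<Longrightarrow> X \<le> ereal u * g z + c"
  shows "X \<le> ereal u * (INF z\<in>S. g z) + c"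
proof (cases c)
  case (real c')
  have iff: "Y \<le> ereal u * a + ereal c' \<longleftrightarrow> (Y - ereal c') * ereal (1/u) \<le> a" for Y a :: ereal
    using u by (cases Y; cases a) (auto simp: field_simps)
  have "(X - ereal c') * ereal (1/u) \<le> (INF z\<in>S. g z)"
    using le by (intro INF_greatest) (simp add: real flip: iff)
  then show ?thesis unfolding real iff .
qed (use c in auto)

lemma ereal_convex_comb_add:
  fixes a1 a2 b1 b2 :: ereal
  assumes "a1 \<noteq> -\<infinity>" "a2 \<noteq> -\<infinity>" "b1 \<noteq> -\<infinity>" "b2 \<noteq> -\<infinity>" "0 < u" "u < 1"
  shows "(ereal u * a1 + ereal (1-u) * a2) + (ereal u * b1 + ereal (1-u) * b2)
        = ereal u * (a1 + b1) + ereal (1-u) * (a2 + b2)"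
proof -
  have "ereal u * (a1 + b1) = ereal u * a1 + ereal u * b1"
    using assms by (intro ereal_distrib_left) auto
  moreover have "ereal (1-u) * (a2 + b2) = ereal (1-u) * a2 + ereal (1-u) * b2"
    using assms by (intro ereal_distrib_left) auto
  ultimately show ?thesis by (simp add: ac_simps)
qed

lemma sum_ereal_neq_MInfty: "(\<And>i. i \<in> I \<Longrightarrow> f i \<noteq> (-\<infinity>::ereal)) \<Longrightarrow> sum f I \<noteq> -\<infinity>"
  by (induction I rule: infinite_finite_induct) (auto simp: ereal_plus_eq_MInfty)

lemma convex_ef_add:
  assumes "convex_ef F" "convex_ef G" "\<And>y. F y \<noteq> -\<infinity>" "\<And>y. G y \<noteq> -\<infinity>"
  shows "convex_ef (\<lambda>y. F y + G y)"
  unfolding convex_ef_def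
proof (intro allI impI)
  fix y z and u :: real assume u: "0 < u \<and> u < 1"
  have "F (u *\<^sub>R y + (1 - u) *\<^sub>R z) + G (u *\<^sub>R y + (1 - u) *\<^sub>R z)
     \<le> (ereal u * F y + ereal (1-u) * F z) + (ereal u * G y + ereal (1-u) * G z)"
    using assms(1,2) u unfolding convex_ef_def by (intro add_mono) auto
  also have "\<dots> = ereal u * (F y + G y) + ereal (1 - u) * (F z + G z)"
    using assms u by (intro ereal_convex_comb_add) auto
  finally show "F (u *\<^sub>R y + (1 - u) *\<^sub>R z) + G (u *\<^sub>R y + (1 - u) *\<^sub>R z)
     \<le> ereal u * (F y + G y) + ereal (1 - u) * (F z + G z)" .
qed

lemma convex_ef_cmult:
  assumes "convex_ef F" "\<And>y. F y \<noteq> -\<infinity>" "0 \<le> c"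
  shows "convex_ef (\<lambda>y. ereal c * F y)"
  unfolding convex_ef_def
proof (intro allI impI)
  fix y z and u :: real assume u: "0 < u \<and> u < 1"
  have "ereal c * F (u *\<^sub>R y + (1 - u) *\<^sub>R z) \<le> ereal c * (ereal u * F y + ereal (1-u) * F z)"
    using assms u unfolding convex_ef_def by (intro ereal_mult_left_mono) auto
  also have "\<dots> = ereal u * (ereal c * F y) + ereal (1 - u) * (ereal c * F z)"
    using assms u by (subst ereal_distrib_left) (auto simp: ac_simps)
  finally show "ereal c * F (u *\<^sub>R y + (1 - u) *\<^sub>R z)
     \<le> ereal u * (ereal c * F y) + ereal (1 - u) * (ereal c * F z)" .
qed

lemma convex_ef_sum:
  assumes "finite I" "\<And>i. i \<in> I \<Longrightarrow> convex_ef (F i)" "\<And>i y. i \<in> I \<Longrightarrow> F i y \<noteq> -\<infinity>"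
  shows "convex_ef (\<lambda>y. \<Sum>i\<in>I. F i y)"
  using assms
proof (induction I rule: finite_induct)
  case empty
  then show ?case by (simp add: convex_ef_def)
next
  case (insert x I)
  have "convex_ef (\<lambda>y. F x y + (\<Sum>i\<in>I. F i y))"
    using insert by (intro convex_ef_add sum_ereal_neq_MInfty) auto
  then show ?case using insert by simp
qed

lemma convex_ef_INF_graph:
  fixes h :: "'a::real_vector \<Rightarrow> 'b::real_vector \<Rightarrow> ereal" and F :: "'b \<Rightarrow> ereal"
    and S :: "'a \<Rightarrow> 'b set"
  assumes ch: "convex_ef (\<lambda>(y,z). h y z)" and hm: "\<And>y z. h y z \<noteq> -\<infinity>"
    and cF: "convex_ef F" and Fm: "\<And>z. F z \<noteq> -\<infinity>"
    and cS: "convex {(y, z). z \<in> S y}"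
    and mm: "\<And>y. (INF z\<in>S y. h y z + F z) \<noteq> -\<infinity>"
  shows "convex_ef (\<lambda>y. INF z\<in>S y. h y z + F z)"
  unfolding convex_ef_def
proof (intro allI impI)
  fix y1 y2 :: 'a and u :: real assume u: "0 < u \<and> u < 1"
  define m where "m = (\<lambda>y. INF z\<in>S y. h y z + F z)"
  define y where "y = u *\<^sub>R y1 + (1-u) *\<^sub>R y2"
  have key: "m y \<le> ereal u * (h y1 z1 + F z1) + ereal (1-u) * (h y2 z2 + F z2)"
    if z: "z1 \<in> S y1" "z2 \<in> S y2" for z1 z2
  proof -
    define z where "z = u *\<^sub>R z1 + (1-u) *\<^sub>R z2"
    have yz: "u *\<^sub>R (y1, z1) + (1-u) *\<^sub>R (y2, z2) = (y, z)" by (simp add: y_def z_def)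
    have "u *\<^sub>R (y1, z1) + (1-u) *\<^sub>R (y2, z2) \<in> {(y, z). z \<in> S y}"
      using u z by (intro convexD[OF cS]) auto
    then have "z \<in> S y" unfolding yz by simp
    then have "m y \<le> h y z + F z" unfolding m_def by (rule INF_lower)
    also have "\<dots> \<le> (ereal u * h y1 z1 + ereal (1-u) * h y2 z2) + (ereal u * F z1 + ereal (1-u) * F z2)"
    proof (intro add_mono)
      show "h y z \<le> ereal u * h y1 z1 + ereal (1-u) * h y2 z2"
        using ch u yz unfolding convex_ef_def by (metis (mono_tags, lifting) case_prod_conv)
      show "F z \<le> ereal u * F z1 + ereal (1-u) * F z2"
        using cF u unfolding convex_ef_def z_def by auto
    qed
    also have "\<dots> = ereal u * (h y1 z1 + F z1) + ereal (1-u) * (h y2 z2 + F z2)"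
      using u hm Fm by (intro ereal_convex_comb_add) auto
    finally show ?thesis .
  qed
  have step: "m y \<le> ereal u * (INF z\<in>S y1. h y1 z + F z) + ereal (1-u) * (h y2 z2 + F z2)"
    if z2: "z2 \<in> S y2" for z2
    by (rule ereal_le_mult_INF_add) (use u hm Fm key[OF _ z2] in \<open>auto simp: ereal_plus_eq_MInfty\<close>)
  have "m y \<le> ereal (1-u) * (INF z\<in>S y2. h y2 z + F z) + ereal u * (INF z\<in>S y1. h y1 z + F z)"
    using u mm step by (intro ereal_le_mult_INF_add) (auto simp: add.commute)
  then show "(INF z\<in>S (u *\<^sub>R y1 + (1 - u) *\<^sub>R y2). h (u *\<^sub>R y1 + (1 - u) *\<^sub>R y2) z + F z)
       \<le> ereal u * (INF z\<in>S y1. h y1 z + F z) + ereal (1 - u) * (INF z\<in>S y2. h y2 z + F z)"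
    unfolding m_def y_def by (simp add: add.commute)
qed

lemma convex_on_real_of_ereal:
  assumes cF: "convex_ef F" and K: "convex K" and fin: "\<And>y. y \<in> K \<Longrightarrow> \<bar>F y\<bar> \<noteq> \<infinity>"
  shows "convex_on K (\<lambda>y. real_of_ereal (F y))"
proof (intro convex_onI K)
  fix x y and u :: real assume xy: "x \<in> K" "y \<in> K" and u: "0 < u" "u < 1"
  have w: "(1 - u) *\<^sub>R x + u *\<^sub>R y \<in> K" using K xy u by (intro convexD) auto
  have "0 < 1 - u" "1 - u < 1" using u by auto
  then have "F ((1 - u) *\<^sub>R x + (1 - (1 - u)) *\<^sub>R y) \<le> ereal (1 - u) * F x + ereal (1 - (1 - u)) * F y"
    using cF unfolding convex_ef_def by blast
  then show "real_of_ereal (F ((1 - u) *\<^sub>R x + u *\<^sub>R y)) \<le> (1 - u) * real_of_ereal (F x) + u * real_of_ereal (F y)"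
    using fin[OF xy(1)] fin[OF xy(2)] fin[OF w]
    by (cases "F x"; cases "F y"; cases "F ((1 - u) *\<^sub>R x + u *\<^sub>R y)") auto
qed

lemma mem_fatten: "y \<in> fatten X e \<longleftrightarrow> (\<exists>x\<in>X. dist x y \<le> e)"
  by (auto simp: fatten_def)

lemma fatten_eq_sums: "fatten X e = {x + y |x y. x \<in> X \<and> y \<in> cball 0 e}"
proof (intro set_eqI iffI)
  fix z assume "z \<in> fatten X e"
  then obtain x where "x \<in> X" "dist x z \<le> e" by (auto simp: mem_fatten)
  then show "z \<in> {x + y |x y. x \<in> X \<and> y \<in> cball 0 e}"
    by (intro CollectI exI[of _ x] exI[of _ "z - x"]) (auto simp: dist_norm norm_minus_commute)
qed (force simp: mem_fatten dist_norm)

lemma fatten_subset: "0 \<le> e \<Longrightarrow> X \<subseteq> fatten X e"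
  by (auto simp: fatten_def)

lemma convex_fatten:
  assumes "convex X" shows "convex (fatten X e)"
proof -
  have "fatten X e = (\<Union>x\<in>X. \<Union>y\<in>cball 0 e. {x + y})" unfolding fatten_eq_sums by blast
  then show ?thesis using convex_sums[OF assms convex_cball] by simp
qed

lemma compact_fatten:
  fixes X :: "'a::{heine_borel,real_normed_vector} set"
  shows "compact X \<Longrightarrow> compact (fatten X e)"
  unfolding fatten_eq_sums by (intro compact_sums compact_cball)

section \<open>Borel--Cantelli for trials with constant conditional success probability\<close>

text \<open>\<open>agree k \<omega> \<omega>'\<close> says that \<open>\<omega>\<close> and \<open>\<omega>'\<close> have the same history before trial \<open>k\<close>; given any
  such history, trial \<open>k\<close> succeeds with probability \<open>c\<close>.\<close>

locale past_determined_trials = prob_space +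
  fixes agree :: "nat \<Rightarrow> 'a \<Rightarrow> 'a \<Rightarrow> bool"
    and success :: "nat \<Rightarrow> 'a \<Rightarrow> bool"
    and c :: real
  assumes agree_SucD: "agree (Suc k) \<omega> \<omega>' \<Longrightarrow> agree k \<omega> \<omega>'"
    and determined_event: "(\<And>\<omega> \<omega>'. agree k \<omega> \<omega>' \<Longrightarrow> P \<omega> = P \<omega>') \<Longrightarrow> {\<omega> \<in> space M. P \<omega>} \<in> events"
    and success_determined: "agree (Suc k) \<omega> \<omega>' \<Longrightarrow> success k \<omega> = success k \<omega>'"
    and prob_success: "(\<And>\<omega> \<omega>'. agree k \<omega> \<omega>' \<Longrightarrow> P \<omega> = P \<omega>') \<Longrightarrow>
          prob {\<omega> \<in> space M. P \<omega> \<and> success k \<omega>} = c * prob {\<omega> \<in> space M. P \<omega>}"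
    and success_prob_pos: "0 < c"
begin

lemma agree_mono: "k \<le> K \<Longrightarrow> agree K \<omega> \<omega>' \<Longrightarrow> agree k \<omega> \<omega>'"
  by (induction k rule: inc_induct) (auto dest: agree_SucD)

lemma success_prob_le_1: "c \<le> 1"
  using prob_success[of 0 "\<lambda>_. True"] prob_le_1[of "{\<omega> \<in> space M. success 0 \<omega>}"]
  by (simp add: prob_space)

definition decay :: real where "decay = 1 - c / 2"

lemma decay: "0 < decay" "decay < 1" "(1 - c) / decay \<le> 1"
  using success_prob_pos success_prob_le_1 unfolding decay_def by (auto simp: field_simps)

context
  fixes A :: "nat \<Rightarrow> 'a \<Rightarrow> bool"
  assumes A_determined: "\<And>k \<omega> \<omega>'. agree k \<omega> \<omega>' \<Longrightarrow> A k \<omega> = A k \<omega>'"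
begin

definition avoids :: "nat \<Rightarrow> 'a \<Rightarrow> bool"
  where "avoids K \<omega> \<longleftrightarrow> (\<forall>k<K. A k \<omega> \<longrightarrow> \<not> success k \<omega>)"

definition hits :: "nat \<Rightarrow> 'a \<Rightarrow> nat"
  where "hits K \<omega> = card {k. k < K \<and> A k \<omega>}"

definition level :: "nat \<Rightarrow> nat \<Rightarrow> 'a set"
  where "level K j = {\<omega> \<in> space M. avoids K \<omega> \<and> hits K \<omega> = j}"

text \<open>A trial at an \<open>A\<close>-time keeps a sample at the next level only with probability \<open>1 - c \<le> decay\<close>,
  so weighting level \<open>j\<close> by \<open>decay\<^sup>-\<^sup>j\<close> makes the potential non-increasing.\<close>

definition potential :: "nat \<Rightarrow> real"
  where "potential K = (\<Sum>j\<le>K. prob (level K j) / decay ^ j)"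

lemma avoids_hits_determined:
  assumes "agree K \<omega> \<omega>'"
  shows "avoids K \<omega> = avoids K \<omega>'" "hits K \<omega> = hits K \<omega>'"
proof -
  have "A k \<omega> = A k \<omega>' \<and> success k \<omega> = success k \<omega>'" if "k < K" for k
  proof -
    have "agree (Suc k) \<omega> \<omega>'" using agree_mono[of "Suc k" K] that assms by simp
    then show ?thesis using A_determined[OF agree_SucD] success_determined by blast
  qed
  then show "avoids K \<omega> = avoids K \<omega>'" "hits K \<omega> = hits K \<omega>'"
    unfolding avoids_def hits_def by (auto intro!: arg_cong[where f = card])
qed

lemma hits_le: "hits K \<omega> \<le> K"
  unfolding hits_def by (rule order_trans[OF card_mono[of "{..<K}"]]) auto

lemma hits_mono: "K \<le> K' \<Longrightarrow> hits K \<omega> \<le> hits K' \<omega>"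
  unfolding hits_def by (intro card_mono) auto

lemma level_event: "level K j \<in> events"
  unfolding level_def by (rule determined_event[of K]) (simp add: avoids_hits_determined)

lemma occurs_event: "{\<omega> \<in> space M. A K \<omega>} \<in> events"
  by (rule determined_event) (rule A_determined)

lemma avoids_Suc: "avoids (Suc K) \<omega> \<longleftrightarrow> avoids K \<omega> \<and> (A K \<omega> \<longrightarrow> \<not> success K \<omega>)"
  unfolding avoids_def by (auto simp: less_Suc_eq)

lemma hits_Suc: "hits (Suc K) \<omega> = (if A K \<omega> then Suc (hits K \<omega>) else hits K \<omega>)"
proof -
  have "{k. k < Suc K \<and> A k \<omega>} = (if A K \<omega> then insert K {k. k < K \<and> A k \<omega>} else {k. k < K \<and> A k \<omega>})"
    by (auto simp: less_Suc_eq)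
  then show ?thesis unfolding hits_def by auto
qed

lemma prob_failed_trial:
  "prob {\<omega> \<in> space M. avoids K \<omega> \<and> hits K \<omega> = i \<and> A K \<omega> \<and> \<not> success K \<omega>}
    = (1 - c) * prob (level K i \<inter> {\<omega> \<in> space M. A K \<omega>})"
proof -
  define P where "P \<omega> \<longleftrightarrow> avoids K \<omega> \<and> hits K \<omega> = i \<and> A K \<omega>" for \<omega>
  have P_determined: "agree K \<omega> \<omega>' \<Longrightarrow> P \<omega> = P \<omega>'" for \<omega> \<omega>'
    unfolding P_def by (simp add: avoids_hits_determined A_determined[of K \<omega> \<omega>'])
  have success_event: "{\<omega> \<in> space M. P \<omega> \<and> success K \<omega>} \<in> events"
    by (rule determined_event[of "Suc K"]) (simp add: P_determined[OF agree_SucD] success_determined)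
  have "{\<omega> \<in> space M. avoids K \<omega> \<and> hits K \<omega> = i \<and> A K \<omega> \<and> \<not> success K \<omega>}
      = {\<omega> \<in> space M. P \<omega>} - {\<omega> \<in> space M. P \<omega> \<and> success K \<omega>}"
    unfolding P_def by auto
  also have "prob \<dots> = prob {\<omega> \<in> space M. P \<omega>} - prob {\<omega> \<in> space M. P \<omega> \<and> success K \<omega>}"
    using determined_event[OF P_determined] success_event by (auto intro!: finite_measure_Diff)
  also have "\<dots> = (1 - c) * prob {\<omega> \<in> space M. P \<omega>}"
    using prob_success[OF P_determined] by (simp add: algebra_simps)
  also have "{\<omega> \<in> space M. P \<omega>} = level K i \<inter> {\<omega> \<in> space M. A K \<omega>}"
    unfolding P_def level_def by auto
  finally show ?thesis .
qed

lemma prob_level_Suc: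
  "prob (level (Suc K) j) = prob (level K j) - prob (level K j \<inter> {\<omega> \<in> space M. A K \<omega>})
     + (if j = 0 then 0 else (1 - c) * prob (level K (j - 1) \<inter> {\<omega> \<in> space M. A K \<omega>}))"
proof -
  define F where "F = {\<omega> \<in> space M. avoids K \<omega> \<and> A K \<omega> \<and> \<not> success K \<omega> \<and> Suc (hits K \<omega>) = j}"
  have F_event: "F \<in> events"
    unfolding F_def
  proof (rule determined_event[of "Suc K"])
    fix \<omega> \<omega>' assume ag: "agree (Suc K) \<omega> \<omega>'"
    then have "agree K \<omega> \<omega>'" by (rule agree_SucD)
    then show "(avoids K \<omega> \<and> A K \<omega> \<and> \<not> success K \<omega> \<and> Suc (hits K \<omega>) = j) =
               (avoids K \<omega>' \<and> A K \<omega>' \<and> \<not> success K \<omega>' \<and> Suc (hits K \<omega>') = j)"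
      by (simp add: avoids_hits_determined A_determined[of K \<omega> \<omega>'] success_determined[OF ag])
  qed
  have "level (Suc K) j = (level K j - {\<omega> \<in> space M. A K \<omega>}) \<union> F"
    unfolding level_def F_def avoids_Suc hits_Suc by auto
  then have "prob (level (Suc K) j) = prob (level K j - {\<omega> \<in> space M. A K \<omega>}) + prob F"
    using level_event occurs_event F_event by (auto intro!: finite_measure_Union simp: F_def)
  also have "prob (level K j - {\<omega> \<in> space M. A K \<omega>}) = prob (level K j) - prob (level K j \<inter> {\<omega> \<in> space M. A K \<omega>})"
    by (rule finite_measure_Diff'[OF level_event occurs_event])
  also have "prob F = (if j = 0 then 0 else (1 - c) * prob (level K (j - 1) \<inter> {\<omega> \<in> space M. A K \<omega>}))"
  proof (cases j)
    case (Suc i)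
    have "F = {\<omega> \<in> space M. avoids K \<omega> \<and> hits K \<omega> = i \<and> A K \<omega> \<and> \<not> success K \<omega>}"
      unfolding F_def Suc by auto
    then show ?thesis using prob_failed_trial Suc by simp
  qed (simp add: F_def)
  finally show ?thesis .
qed

lemma potential_Suc_le: "potential (Suc K) \<le> potential K"
proof -
  define e where "e j = prob (level K j)" for j
  define a where "a j = prob (level K j \<inter> {\<omega> \<in> space M. A K \<omega>})" for j
  have a_le_e: "0 \<le> a j" for j unfolding a_def by simp
  have "hits K \<omega> \<noteq> Suc K" for \<omega> using hits_le[of K \<omega>] by simp
  then have "level K (Suc K) = {}" unfolding level_def by auto
  then have top: "e (Suc K) = 0" "a (Suc K) = 0" unfolding e_def a_def by auto
  have "potential (Suc K) = (\<Sum>j\<le>Suc K. (e j - a j) / decay ^ j)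
      + (\<Sum>j\<le>Suc K. (if j = 0 then 0 else (1 - c) * a (j - 1)) / decay ^ j)"
    unfolding potential_def prob_level_Suc e_def a_def by (simp add: add_divide_distrib sum.distrib)
  also have "(\<Sum>j\<le>Suc K. (e j - a j) / decay ^ j) = (\<Sum>j\<le>K. (e j - a j) / decay ^ j)"
    using top by simp
  also have "(\<Sum>j\<le>Suc K. (if j = 0 then 0 else (1 - c) * a (j - 1)) / decay ^ j)
      = (\<Sum>j\<le>K. (1 - c) / decay * a j / decay ^ j)"
    unfolding sum.atMost_Suc_shift by simp
  also have "(\<Sum>j\<le>K. (e j - a j) / decay ^ j) + (\<Sum>j\<le>K. (1 - c) / decay * a j / decay ^ j)
      \<le> (\<Sum>j\<le>K. e j / decay ^ j)"
    unfolding sum.distrib[symmetric]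
  proof (rule sum_mono)
    fix j
    have "(1 - c) / decay * a j \<le> a j"
      using decay a_le_e[of j] by (intro mult_left_le_one_le) (auto simp: success_prob_le_1)
    then have "(1 - c) / decay * a j / decay ^ j \<le> a j / decay ^ j"
      using decay by (intro divide_right_mono) auto
    moreover have "(e j - a j) / decay ^ j = e j / decay ^ j - a j / decay ^ j"
      by (rule diff_divide_distrib)
    ultimately show "(e j - a j) / decay ^ j + (1 - c) / decay * a j / decay ^ j \<le> e j / decay ^ j"
      by linarith
  qed
  also have "\<dots> = potential K" unfolding potential_def e_def ..
  finally show ?thesis .
qed

lemma potential_le_1: "potential K \<le> 1"
proof (induction K)
  case 0
  have "level 0 0 = space M" unfolding level_def avoids_def hits_def by auto
  then show ?case unfolding potential_def by (simp add: prob_space)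
next
  case (Suc K)
  then show ?case using potential_Suc_le[of K] by simp
qed

lemma prob_avoids_many_hits: "prob {\<omega> \<in> space M. avoids K \<omega> \<and> N \<le> hits K \<omega>} \<le> decay ^ N"
proof -
  have eq: "{\<omega> \<in> space M. avoids K \<omega> \<and> N \<le> hits K \<omega>} = (\<Union>j\<in>{N..K}. level K j)"
    unfolding level_def using hits_le[of K] by auto
  have "prob (\<Union>j\<in>{N..K}. level K j) = (\<Sum>j\<in>{N..K}. prob (level K j))"
  proof (rule finite_measure_finite_Union)
    show "disjoint_family_on (level K) {N..K}"
      unfolding disjoint_family_on_def level_def by auto
  qed (auto simp: level_event)
  then have "prob (\<Union>j\<in>{N..K}. level K j) / decay ^ N = (\<Sum>j\<in>{N..K}. prob (level K j) / decay ^ N)"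
    by (simp add: sum_divide_distrib)
  also have "\<dots> \<le> (\<Sum>j\<in>{N..K}. prob (level K j) / decay ^ j)"
    using decay by (intro sum_mono divide_left_mono power_decreasing) auto
  also have "\<dots> \<le> potential K"
    unfolding potential_def using decay by (intro sum_mono2) auto
  also have "\<dots> \<le> 1" by (rule potential_le_1)
  finally show ?thesis unfolding eq using decay by (simp add: field_simps)
qed

lemma never_success_event: "{\<omega> \<in> space M. \<forall>k. A k \<omega> \<longrightarrow> \<not> success k \<omega>} \<in> events"
proof -
  have "{\<omega> \<in> space M. A k \<omega> \<longrightarrow> \<not> success k \<omega>} \<in> events" for k
  proof (rule determined_event)
    fix \<omega> \<omega>' assume ag: "agree (Suc k) \<omega> \<omega>'"
    show "(A k \<omega> \<longrightarrow> \<not> success k \<omega>) = (A k \<omega>' \<longrightarrow> \<not> success k \<omega>')"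
      using A_determined[OF agree_SucD[OF ag]] success_determined[OF ag] by simp
  qed
  then show ?thesis by (rule sets.sets_Collect_countable_All)
qed

lemma hits_ge_event: "{\<omega> \<in> space M. N \<le> hits K \<omega>} \<in> events"
  by (rule determined_event[of K]) (simp only: avoids_hits_determined(2))

lemma prob_never_success_hits_ge:
  "prob {\<omega> \<in> space M. (\<forall>k. A k \<omega> \<longrightarrow> \<not> success k \<omega>) \<and> (\<exists>K. N \<le> hits K \<omega>)} \<le> decay ^ N"
proof -
  define G where "G K = {\<omega> \<in> space M. (\<forall>k. A k \<omega> \<longrightarrow> \<not> success k \<omega>) \<and> N \<le> hits K \<omega>}" for K
  have G_event: "G K \<in> events" for K
    unfolding G_def by (intro sets.sets_Collect_conj never_success_event hits_ge_event)
  have G_mono: "incseq G"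
  proof (rule monoI, rule subsetI)
    fix K K' \<omega> assume "K \<le> K'" "\<omega> \<in> G K"
    then show "\<omega> \<in> G K'" unfolding G_def using hits_mono[of K K' \<omega>] by auto
  qed
  have "prob (G K) \<le> decay ^ N" for K
  proof -
    have "G K \<subseteq> {\<omega> \<in> space M. avoids K \<omega> \<and> N \<le> hits K \<omega>}"
      unfolding G_def avoids_def by auto
    moreover have "{\<omega> \<in> space M. avoids K \<omega> \<and> N \<le> hits K \<omega>} \<in> events"
      by (rule determined_event[of K]) (simp only: avoids_hits_determined)
    ultimately have "prob (G K) \<le> prob {\<omega> \<in> space M. avoids K \<omega> \<and> N \<le> hits K \<omega>}"
      by (rule finite_measure_mono)
    then show ?thesis using prob_avoids_many_hits[of K N] by linarith
  qed
  moreover have "(\<lambda>K. prob (G K)) \<longlonglongrightarrow> prob (\<Union>K. G K)"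
    by (rule finite_Lim_measure_incseq) (use G_event G_mono in blast)+
  ultimately have "prob (\<Union>K. G K) \<le> decay ^ N"
    by (intro LIMSEQ_le_const2) auto
  moreover have "(\<Union>K. G K) = {\<omega> \<in> space M. (\<forall>k. A k \<omega> \<longrightarrow> \<not> success k \<omega>) \<and> (\<exists>K. N \<le> hits K \<omega>)}"
    unfolding G_def by auto
  ultimately show ?thesis by simp
qed

lemma never_success_null:
  "{\<omega> \<in> space M. (\<forall>k. A k \<omega> \<longrightarrow> \<not> success k \<omega>) \<and> (\<forall>N. \<exists>K. N \<le> hits K \<omega>)} \<in> null_sets M"
  (is "?Z \<in> null_sets M")
proof -
  have Z_event: "?Z \<in> events"
    by (intro sets.sets_Collect_conj sets.sets_Collect_countable_All sets.sets_Collect_countable_Ex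
        never_success_event hits_ge_event)
  have "prob ?Z \<le> decay ^ N" for N
  proof -
    have "?Z \<subseteq> {\<omega> \<in> space M. (\<forall>k. A k \<omega> \<longrightarrow> \<not> success k \<omega>) \<and> (\<exists>K. N \<le> hits K \<omega>)}" by auto
    moreover have "{\<omega> \<in> space M. (\<forall>k. A k \<omega> \<longrightarrow> \<not> success k \<omega>) \<and> (\<exists>K. N \<le> hits K \<omega>)} \<in> events"
      by (intro sets.sets_Collect_conj sets.sets_Collect_countable_Ex never_success_event hits_ge_event)
    ultimately have "prob ?Z \<le> prob {\<omega> \<in> space M. (\<forall>k. A k \<omega> \<longrightarrow> \<not> success k \<omega>) \<and> (\<exists>K. N \<le> hits K \<omega>)}"
      by (rule finite_measure_mono)
    then show ?thesis using prob_never_success_hits_ge[of N] by linarith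
  qed
  moreover have "(\<lambda>N. decay ^ N) \<longlonglongrightarrow> 0"
    using decay by (intro LIMSEQ_power_zero) auto
  ultimately have "prob ?Z \<le> 0"
    using LIMSEQ_le_const[of "\<lambda>N. decay ^ N" 0 "prob ?Z"] by blast
  then have "emeasure M ?Z = 0"
    using measure_nonneg[of M ?Z] by (simp add: emeasure_eq_measure)
  then show ?thesis using Z_event by (rule null_setsI)
qed

lemma frequently_imp_hits_unbounded:
  assumes "\<exists>\<^sub>\<infinity>k. A k \<omega>"
  shows "\<exists>K. N \<le> hits K \<omega>"
proof -
  obtain S where S: "finite S" "card S = N" "S \<subseteq> {k. A k \<omega>}"
    using assms infinite_arbitrarily_large unfolding INFM_iff_infinite by blast
  have "S \<subseteq> {k. k < Suc (Max (insert 0 S)) \<and> A k \<omega>}"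
    using S by (auto simp: le_imp_less_Suc)
  moreover have "finite {k. k < Suc (Max (insert 0 S)) \<and> A k \<omega>}" by simp
  ultimately have "card S \<le> hits (Suc (Max (insert 0 S))) \<omega>"
    unfolding hits_def by (rule card_mono[rotated])
  then have "N \<le> hits (Suc (Max (insert 0 S))) \<omega>" using S by simp
  then show ?thesis ..
qed

end

theorem AE_frequently_success:
  assumes A_determined: "\<And>k \<omega> \<omega>'. agree k \<omega> \<omega>' \<Longrightarrow> A k \<omega> = A k \<omega>'"
  shows "AE \<omega> in M. (\<exists>\<^sub>\<infinity>k. A k \<omega>) \<longrightarrow> (\<exists>\<^sub>\<infinity>k. A k \<omega> \<and> success k \<omega>)"
proof -
  define A' where "A' m k \<omega> \<longleftrightarrow> m \<le> k \<and> A k \<omega>" for m k \<omega>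
  have A'_determined: "agree k \<omega> \<omega>' \<Longrightarrow> A' m k \<omega> = A' m k \<omega>'" for m k \<omega> \<omega>'
    unfolding A'_def using A_determined by auto
  have "{\<omega> \<in> space M. (\<forall>k. A' m k \<omega> \<longrightarrow> \<not> success k \<omega>) \<and> (\<forall>N. \<exists>K. N \<le> hits (A' m) K \<omega>)}
      \<in> null_sets M" for m
    by (rule never_success_null) (rule A'_determined)
  then have null: "(\<Union>m. {\<omega> \<in> space M. (\<forall>k. A' m k \<omega> \<longrightarrow> \<not> success k \<omega>) \<and> (\<forall>N. \<exists>K. N \<le> hits (A' m) K \<omega>)})
      \<in> null_sets M"
    by blast
  have "{\<omega> \<in> space M. \<not> ((\<exists>\<^sub>\<infinity>k. A k \<omega>) \<longrightarrow> (\<exists>\<^sub>\<infinity>k. A k \<omega> \<and> success k \<omega>))}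
      \<subseteq> (\<Union>m. {\<omega> \<in> space M. (\<forall>k. A' m k \<omega> \<longrightarrow> \<not> success k \<omega>) \<and> (\<forall>N. \<exists>K. N \<le> hits (A' m) K \<omega>)})"
  proof
    fix \<omega> assume "\<omega> \<in> {\<omega> \<in> space M. \<not> ((\<exists>\<^sub>\<infinity>k. A k \<omega>) \<longrightarrow> (\<exists>\<^sub>\<infinity>k. A k \<omega> \<and> success k \<omega>))}"
    then have \<omega>: "\<omega> \<in> space M" "\<exists>\<^sub>\<infinity>k. A k \<omega>" "\<not> (\<exists>\<^sub>\<infinity>k. A k \<omega> \<and> success k \<omega>)"
      by auto
    then obtain m where m: "\<forall>k\<ge>m. A k \<omega> \<longrightarrow> \<not> success k \<omega>"
      unfolding not_INFM MOST_nat_le by blast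
    have "\<exists>\<^sub>\<infinity>k. A' m k \<omega>"
      using \<omega>(2) unfolding A'_def INFM_nat_le by (meson le_trans nat_le_linear)
    then have "\<forall>N. \<exists>K. N \<le> hits (A' m) K \<omega>"
      by (intro allI frequently_imp_hits_unbounded A'_determined) simp_all
    then show "\<omega> \<in> (\<Union>m. {\<omega> \<in> space M. (\<forall>k. A' m k \<omega> \<longrightarrow> \<not> success k \<omega>) \<and> (\<forall>N. \<exists>K. N \<le> hits (A' m) K \<omega>)})"
      using \<omega>(1) m unfolding A'_def by blast
  qed
  then show ?thesis by (rule AE_I'[OF null])
qed

end

section \<open>Value functions and cuts of SREDA\<close>

lemma Qinf_mono:
  "(\<And>z. F z \<le> G z) \<Longrightarrow> Qinf f Xf F s y \<xi> \<le> Qinf f Xf G s y \<xi>"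
  unfolding Qinf_def by (intro INF_mono) (auto intro: add_mono)

lemma is_subgrad_finite: "is_subgrad F y \<pi> \<Longrightarrow> F y = ereal (real_of_ereal (F y))"
  by (cases "F y") (auto simp: is_subgrad_def)

lemma is_subgrad_le: "is_subgrad F y \<pi> \<Longrightarrow> F y + ereal (\<pi> \<bullet> (z - y)) \<le> F z"
  by (simp add: is_subgrad_def)

lemma sum_ereal_less_PInfty: "(\<And>i. i \<in> I \<Longrightarrow> f i < (\<infinity>::ereal)) \<Longrightarrow> sum f I < \<infinity>"
  by (induction I rule: infinite_finite_induct) (auto simp: ereal_add_strict_mono2)

lemma convex_feas_graph:
  assumes cX: "convex (Xs s)" and cg: "\<And>i. i < ng s \<Longrightarrow> convex_on UNIV (\<lambda>(y, z). g s i y z \<xi>)"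
  shows "convex {(y, z). z \<in> feas Xs g ng Ar Br bv nr s y \<xi>}"
proof (rule convexI)
  fix w1 w2 and u v :: real
  assume w: "w1 \<in> {(y, z). z \<in> feas Xs g ng Ar Br bv nr s y \<xi>}" "w2 \<in> {(y, z). z \<in> feas Xs g ng Ar Br bv nr s y \<xi>}"
    and uv: "0 \<le> u" "0 \<le> v" "u + v = 1"
  obtain y1 z1 y2 z2 where w12: "w1 = (y1, z1)" "w2 = (y2, z2)" by fastforce
  have z1: "z1 \<in> feas Xs g ng Ar Br bv nr s y1 \<xi>" and z2: "z2 \<in> feas Xs g ng Ar Br bv nr s y2 \<xi>"
    using w unfolding w12 by auto
  have "u *\<^sub>R z1 + v *\<^sub>R z2 \<in> Xs s"
    using z1 z2 uv by (intro convexD[OF cX]) (auto simp: feas_def)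
  moreover have "g s i (u *\<^sub>R y1 + v *\<^sub>R y2) (u *\<^sub>R z1 + v *\<^sub>R z2) \<xi> \<le> 0" if i: "i < ng s" for i
  proof -
    have u: "u = 1 - v" using uv by simp
    have "(\<lambda>(y, z). g s i y z \<xi>) ((1 - v) *\<^sub>R (y1, z1) + v *\<^sub>R (y2, z2))
        \<le> (1 - v) * (\<lambda>(y, z). g s i y z \<xi>) (y1, z1) + v * (\<lambda>(y, z). g s i y z \<xi>) (y2, z2)"
      using uv by (intro convex_onD[OF cg[OF i]]) auto
    then have "(\<lambda>(y, z). g s i y z \<xi>) (u *\<^sub>R (y1, z1) + v *\<^sub>R (y2, z2))
        \<le> u * (\<lambda>(y, z). g s i y z \<xi>) (y1, z1) + v * (\<lambda>(y, z). g s i y z \<xi>) (y2, z2)"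
      unfolding u .
    also have "\<dots> \<le> 0"
      using z1 z2 uv i by (auto simp: feas_def intro!: add_nonpos_nonpos mult_nonneg_nonpos)
    finally show ?thesis by simp
  qed
  moreover have "Ar s i \<xi> \<bullet> (u *\<^sub>R z1 + v *\<^sub>R z2) + Br s i \<xi> \<bullet> (u *\<^sub>R y1 + v *\<^sub>R y2) = bv s i \<xi>"
    if i: "i < nr s" for i
  proof -
    have "Ar s i \<xi> \<bullet> (u *\<^sub>R z1 + v *\<^sub>R z2) + Br s i \<xi> \<bullet> (u *\<^sub>R y1 + v *\<^sub>R y2)
      = u * (Ar s i \<xi> \<bullet> z1 + Br s i \<xi> \<bullet> y1) + v * (Ar s i \<xi> \<bullet> z2 + Br s i \<xi> \<bullet> y2)"
      by (simp add: inner_add_right algebra_simps)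
    also have "\<dots> = bv s i \<xi>"
      using z1 z2 uv i by (simp add: feas_def flip: distrib_right)
    finally show ?thesis .
  qed
  ultimately show "u *\<^sub>R w1 + v *\<^sub>R w2 \<in> {(y, z). z \<in> feas Xs g ng Ar Br bv nr s y \<xi>}"
    unfolding w12 by (simp add: feas_def)
qed

lemma sigma_sets_determined:
  fixes X :: "'i \<Rightarrow> 'w \<Rightarrow> 'v::countable" and I :: "'i list"
  assumes determined: "\<And>\<omega> \<omega>'. (\<forall>i\<in>set I. X i \<omega> = X i \<omega>') \<Longrightarrow> P \<omega> = P \<omega>'"
    and generators: "\<And>i v. i \<in> set I \<Longrightarrow> X i -` {v} \<inter> \<Omega> \<in> G" and G: "G \<subseteq> Pow \<Omega>"
  shows "{\<omega> \<in> \<Omega>. P \<omega>} \<in> sigma_sets \<Omega> G"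
proof -
  interpret S: sigma_algebra \<Omega> "sigma_sets \<Omega> G"
    using G by (rule sigma_algebra_sigma_sets)
  define vec where "vec \<omega> = map (\<lambda>i. X i \<omega>) I" for \<omega>
  have cylinder: "{\<omega> \<in> \<Omega>. map (\<lambda>i. X i \<omega>) L = l} \<in> sigma_sets \<Omega> G" if "set L \<subseteq> set I" for L l
    using that
  proof (induction L arbitrary: l)
    case Nil
    show ?case by (cases l) (auto intro: sigma_sets_top sigma_sets.Empty)
  next
    case (Cons i L)
    show ?case
    proof (cases l)
      case Nil
      then show ?thesis by (simp add: sigma_sets.Empty)
    next
      case (Cons v l')
      have "{\<omega> \<in> \<Omega>. map (\<lambda>i. X i \<omega>) (i # L) = l} = (X i -` {v} \<inter> \<Omega>) \<inter> {\<omega> \<in> \<Omega>. map (\<lambda>i. X i \<omega>) L = l'}"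
        using Cons by auto
      moreover have "X i -` {v} \<inter> \<Omega> \<in> sigma_sets \<Omega> G"
        using Cons.prems generators by (intro sigma_sets.Basic) auto
      moreover have "{\<omega> \<in> \<Omega>. map (\<lambda>i. X i \<omega>) L = l'} \<in> sigma_sets \<Omega> G"
        using Cons.IH Cons.prems by auto
      ultimately show ?thesis by (simp add: S.Int)
    qed
  qed
  have "{\<omega> \<in> \<Omega>. P \<omega>} = (\<Union>l\<in>vec ` {\<omega> \<in> \<Omega>. P \<omega>}. {\<omega> \<in> \<Omega>. vec \<omega> = l})"
    using determined unfolding vec_def by (auto simp: map_eq_conv)
  also have "\<dots> \<in> sigma_sets \<Omega> G"
    using cylinder unfolding vec_def by (intro sigma_sets_UNION countable_image countableI_type) auto
  finally show ?thesis .
qed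

lemma infinite_in_some_ball:
  fixes y :: "nat \<Rightarrow> 'a::metric_space"
  assumes X: "compact X" and D: "\<And>U. open U \<Longrightarrow> U \<noteq> {} \<Longrightarrow> \<exists>d\<in>D. d \<in> U" and r: "0 < r"
    and K: "infinite K" and y: "\<And>k. k \<in> K \<Longrightarrow> y k \<in> X"
  shows "\<exists>c\<in>D. infinite {k \<in> K. y k \<in> ball c r}"
proof (rule ccontr)
  assume "\<not> ?thesis"
  then have finite: "finite {k \<in> K. y k \<in> ball c r}" if "c \<in> D" for c
    using that by blast
  have "X \<subseteq> (\<Union>c\<in>D. ball c r)"
  proof
    fix z assume "z \<in> X"
    obtain d where "d \<in> D" "d \<in> ball z r" using D[of "ball z r"] r by auto
    then show "z \<in> (\<Union>c\<in>D. ball c r)" by (auto simp: dist_commute)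
  qed
  then obtain C where C: "C \<subseteq> D" "finite C" "X \<subseteq> (\<Union>c\<in>C. ball c r)"
    using compactE_image[OF X, of D "\<lambda>c. ball c r"] by blast
  then have "K \<subseteq> (\<Union>c\<in>C. {k \<in> K. y k \<in> ball c r})" using y by blast
  moreover have "finite (\<Union>c\<in>C. {k \<in> K. y k \<in> ball c r})" using C finite by blast
  ultimately show False using K finite_subset by blast
qed

locale sreda = prob_space PS
  for PS :: "'w measure" +
  fixes T M :: nat
    and p :: "nat \<Rightarrow> nat \<Rightarrow> real"
    and xi :: "nat \<Rightarrow> nat \<Rightarrow> 'xi"
    and Xs :: "nat \<Rightarrow> 'a::euclidean_space set"
    and f :: "nat \<Rightarrow> 'a \<Rightarrow> 'a \<Rightarrow> 'xi \<Rightarrow> ereal"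
    and Xf :: "nat \<Rightarrow> 'a \<Rightarrow> 'xi \<Rightarrow> 'a set"
    and Q Q0 :: "nat \<Rightarrow> 'a \<Rightarrow> ereal"
    and J :: "nat \<Rightarrow> nat \<Rightarrow> 'w \<Rightarrow> nat"
    and x :: "nat \<Rightarrow> nat list \<Rightarrow> 'w \<Rightarrow> 'a"
    and Qk :: "nat \<Rightarrow> nat \<Rightarrow> 'w \<Rightarrow> 'a \<Rightarrow> ereal"
    and pi :: "nat \<Rightarrow> nat \<Rightarrow> nat \<Rightarrow> 'w \<Rightarrow> 'a"
  assumes p_pos: "s \<in> {2..T} \<Longrightarrow> j < M \<Longrightarrow> 0 < p s j"
    and p_sum: "s \<in> {2..T} \<Longrightarrow> (\<Sum>j<M. p s j) = 1"
    and Xs_convex: "s \<in> {1..T} \<Longrightarrow> convex (Xs s)"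
    and Xs_compact: "s \<in> {1..T} \<Longrightarrow> compact (Xs s)"
    and f_neq_MInfty: "s \<in> {2..T} \<Longrightarrow> j < M \<Longrightarrow> f s y z (xi s j) \<noteq> -\<infinity>"
    and f_convex: "s \<in> {2..T} \<Longrightarrow> j < M \<Longrightarrow> convex_ef (\<lambda>(y, z). f s y z (xi s j))"
    and Xf_subset: "Xf s y \<xi> \<subseteq> Xs s"
    and Xf_graph_convex: "s \<in> {2..T} \<Longrightarrow> j < M \<Longrightarrow> convex {(y, z). z \<in> Xf s y (xi s j)}"
    and f_finite_near: "s \<in> {2..T} \<Longrightarrow> \<exists>\<epsilon>>0. \<forall>j<M. \<forall>y\<in>fatten (Xs (s - 1)) \<epsilon>.
          Xf s y (xi s j) \<noteq> {} \<and> (\<forall>z\<in>Xs s. f s y z (xi s j) < \<infinity>)"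
    and Q_last: "Q (Suc T) y = 0"
    and Q_rec: "s \<in> {2..T} \<Longrightarrow> Q s y = (\<Sum>j<M. ereal (p s j) * Qinf f Xf (Q (Suc s)) s y (xi s j))"
    and Qk_0: "s \<in> {2..T} \<Longrightarrow> Qk 0 s \<omega> = Q0 s"
    and Q0_le: "s \<in> {2..T} \<Longrightarrow> Q0 s y \<le> Q s y"
    and Qk_last: "Qk k (Suc T) \<omega> y = 0"
    and J_measurable: "1 \<le> k \<Longrightarrow> s \<in> {2..T} \<Longrightarrow> J k s \<in> measurable PS (count_space UNIV)"
    and J_distr: "1 \<le> k \<Longrightarrow> s \<in> {2..T} \<Longrightarrow> j < M \<Longrightarrow> prob {\<omega> \<in> space PS. J k s \<omega> = j} = p s j"
    and J_indep: "1 \<le> k \<Longrightarrow> s \<in> {2..T} \<Longrightarrow> indep_set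
          (sigma_sets (space PS) {J k s -` {j} \<inter> space PS | j. True})
          (sigma_sets (space PS) {J k' s' -` {j} \<inter> space PS | j k' s'.
              (1 \<le> k' \<and> k' < k \<and> s' \<in> {2..T}) \<or> (k' = k \<and> s' \<in> {2..<s})})"
    and x_in_Xs: "1 \<le> k \<Longrightarrow> length m < T \<Longrightarrow> set m \<subseteq> {..<M} \<Longrightarrow> x k m \<omega> \<in> Xs (length m + 1)"
    and backward: "1 \<le> k \<Longrightarrow> s \<in> {2..T} \<Longrightarrow>
          (let xn = x k (sampled_node J k (s - 1) \<omega>) \<omega>
           in (\<forall>j<M. is_subgrad (\<lambda>z. Qinf f Xf (Qk k (Suc s) \<omega>) s z (xi s j)) xn (pi k s j \<omega>))
              \<and> Qk k s \<omega> = (\<lambda>y. max (Qk (k - 1) s \<omega> y)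
                   ((\<Sum>j<M. ereal (p s j) * Qinf f Xf (Qk k (Suc s) \<omega>) s xn (xi s j))
                    + ereal ((\<Sum>j<M. p s j *\<^sub>R pi k s j \<omega>) \<bullet> (y - xn)))))"
    and x_adapted: "1 \<le> k \<Longrightarrow> samples_agree J T k \<omega> \<omega>' \<Longrightarrow> x k m \<omega> = x k m \<omega>'"
    and pi_adapted: "1 \<le> k \<Longrightarrow> samples_agree J T (Suc k) \<omega> \<omega>' \<Longrightarrow> pi k s j \<omega> = pi k s j \<omega>'"
begin

definition x_sampled :: "nat \<Rightarrow> nat \<Rightarrow> 'w \<Rightarrow> 'a"
  where "x_sampled k s \<omega> = x k (sampled_node J k (s - 1) \<omega>) \<omega>"

definition cut_slope :: "nat \<Rightarrow> nat \<Rightarrow> 'w \<Rightarrow> 'a"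
  where "cut_slope k s \<omega> = (\<Sum>j<M. p s j *\<^sub>R pi k s j \<omega>)"

definition cut_value :: "nat \<Rightarrow> nat \<Rightarrow> 'w \<Rightarrow> ereal"
  where "cut_value k s \<omega> =
    (\<Sum>j<M. ereal (p s j) * Qinf f Xf (Qk k (Suc s) \<omega>) s (x_sampled k s \<omega>) (xi s j))"

definition cut :: "nat \<Rightarrow> nat \<Rightarrow> 'w \<Rightarrow> 'a \<Rightarrow> ereal"
  where "cut k s \<omega> y = cut_value k s \<omega> + ereal (cut_slope k s \<omega> \<bullet> (y - x_sampled k s \<omega>))"

lemma cut_subgrad:
  assumes "1 \<le> k" "s \<in> {2..T}" "j < M"
  shows "is_subgrad (\<lambda>z. Qinf f Xf (Qk k (Suc s) \<omega>) s z (xi s j)) (x_sampled k s \<omega>) (pi k s j \<omega>)"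
  using backward[OF assms(1,2), of \<omega>] assms(3) unfolding Let_def x_sampled_def by blast

lemma Qk_update:
  assumes "1 \<le> k" "s \<in> {2..T}"
  shows "Qk k s \<omega> y = max (Qk (k - 1) s \<omega> y) (cut k s \<omega> y)"
  using backward[OF assms, of \<omega>]
  unfolding Let_def cut_def cut_value_def cut_slope_def x_sampled_def by simp

lemma cut_le_Qk: "1 \<le> k \<Longrightarrow> s \<in> {2..T} \<Longrightarrow> cut k s \<omega> y \<le> Qk k s \<omega> y"
  by (simp add: Qk_update)

lemma Qk_mono:
  assumes "s \<in> {2..Suc T}" "k \<le> k'"
  shows "Qk k s \<omega> y \<le> Qk k' s \<omega> y"
proof (cases "s = Suc T")
  case False
  then have "s \<in> {2..T}" using assms(1) by auto
  then have "Qk k s \<omega> y \<le> Qk (Suc k) s \<omega> y" for k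
    by (simp add: Qk_update)
  then show ?thesis using lift_Suc_mono_le[of "\<lambda>k. Qk k s \<omega> y"] assms(2) by blast
qed (simp add: Qk_last)

lemma cut_value_eq:
  assumes "1 \<le> k" "s \<in> {2..T}"
  shows "cut_value k s \<omega>
    = ereal (\<Sum>j<M. p s j * real_of_ereal (Qinf f Xf (Qk k (Suc s) \<omega>) s (x_sampled k s \<omega>) (xi s j)))"
proof -
  have "ereal (p s j) * Qinf f Xf (Qk k (Suc s) \<omega>) s (x_sampled k s \<omega>) (xi s j)
      = ereal (p s j * real_of_ereal (Qinf f Xf (Qk k (Suc s) \<omega>) s (x_sampled k s \<omega>) (xi s j)))"
    if j: "j < M" for j
  proof -
    obtain a where "Qinf f Xf (Qk k (Suc s) \<omega>) s (x_sampled k s \<omega>) (xi s j) = ereal a"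
      using is_subgrad_finite[OF cut_subgrad[OF assms j]] by blast
    then show ?thesis by simp
  qed
  then show ?thesis unfolding cut_value_def sum_ereal[symmetric] by (intro sum.cong) auto
qed

lemma cut_eq_affine:
  "1 \<le> k \<Longrightarrow> s \<in> {2..T} \<Longrightarrow>
    cut k s \<omega> y = ereal (real_of_ereal (cut_value k s \<omega>) + cut_slope k s \<omega> \<bullet> (y - x_sampled k s \<omega>))"
  by (simp add: cut_def cut_value_eq)

lemma cut_le_expected_Qinf:
  assumes "1 \<le> k" "s \<in> {2..T}"
  shows "cut k s \<omega> y \<le> (\<Sum>j<M. ereal (p s j) * Qinf f Xf (Qk k (Suc s) \<omega>) s y (xi s j))"
proof -
  define F where "F j z = Qinf f Xf (Qk k (Suc s) \<omega>) s z (xi s j)" for j z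
  define v where "v j = real_of_ereal (F j (x_sampled k s \<omega>))" for j
  have sg: "is_subgrad (F j) (x_sampled k s \<omega>) (pi k s j \<omega>)" if "j < M" for j
    using cut_subgrad[OF assms that] unfolding F_def .
  have Fv: "F j (x_sampled k s \<omega>) = ereal (v j)" if "j < M" for j
    unfolding v_def by (rule is_subgrad_finite[OF sg[OF that]])
  have "cut k s \<omega> y = ereal (\<Sum>j<M. p s j * (v j + pi k s j \<omega> \<bullet> (y - x_sampled k s \<omega>)))"
    unfolding cut_def cut_value_eq[OF assms] cut_slope_def v_def F_def
    by (simp add: inner_sum_left distrib_left sum.distrib)
  also have "\<dots> = (\<Sum>j<M. ereal (p s j) * ereal (v j + pi k s j \<omega> \<bullet> (y - x_sampled k s \<omega>)))"
    by simp
  also have "\<dots> \<le> (\<Sum>j<M. ereal (p s j) * F j y)"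
  proof (rule sum_mono)
    fix j assume "j \<in> {..<M}"
    then have j: "j < M" by simp
    have "ereal (v j + pi k s j \<omega> \<bullet> (y - x_sampled k s \<omega>)) \<le> F j y"
      using is_subgrad_le[OF sg[OF j], of y] Fv[OF j] by simp
    then show "ereal (p s j) * ereal (v j + pi k s j \<omega> \<bullet> (y - x_sampled k s \<omega>)) \<le> ereal (p s j) * F j y"
      using p_pos[OF assms(2) j] by (intro ereal_mult_left_mono) auto
  qed
  finally show ?thesis unfolding F_def .
qed

lemma Qk_le_Q: "s \<in> {2..Suc T} \<Longrightarrow> Qk k s \<omega> y \<le> Q s y"
proof (induction k arbitrary: s y)
  case 0
  then show ?case by (cases "s = Suc T") (auto simp: Qk_last Q_last Qk_0 Q0_le)
next
  case (Suc k)
  from Suc.prems have two: "2 \<le> s" and le: "s \<le> Suc T" by auto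
  from le have "\<forall>y. Qk (Suc k) s \<omega> y \<le> Q s y"
  proof (induction rule: inc_induct)
    case base
    show ?case by (simp add: Qk_last Q_last)
  next
    case (step n)
    then have n: "n \<in> {2..T}" using two by auto
    show ?case
    proof
      fix y
      have "cut (Suc k) n \<omega> y \<le> (\<Sum>j<M. ereal (p n j) * Qinf f Xf (Qk (Suc k) (Suc n) \<omega>) n y (xi n j))"
        using n by (intro cut_le_expected_Qinf) auto
      also have "\<dots> \<le> (\<Sum>j<M. ereal (p n j) * Qinf f Xf (Q (Suc n)) n y (xi n j))"
        using step.IH p_pos[OF n]
        by (intro sum_mono ereal_mult_left_mono Qinf_mono) (auto simp: less_imp_le)
      also have "\<dots> = Q n y" using Q_rec[OF n] by simp
      finally have "cut (Suc k) n \<omega> y \<le> Q n y" .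
      moreover have "Qk k n \<omega> y \<le> Q n y" using Suc.IH n by simp
      ultimately show "Qk (Suc k) n \<omega> y \<le> Q n y" using Qk_update[of "Suc k" n] n by simp
    qed
  qed
  then show ?case by blast
qed

lemma Qinf_Q_neq_MInfty:
  assumes s: "s \<in> {2..T}" and j: "j < M"
  shows "Qinf f Xf (Q (Suc s)) s y (xi s j) \<noteq> -\<infinity>"
proof -
  \<comment> \<open>the iteration-1 subgradient along an arbitrary sample gives an affine minorant\<close>
  fix \<omega> :: 'w
  define F where "F z = Qinf f Xf (Qk 1 (Suc s) \<omega>) s z (xi s j)" for z
  have sg: "is_subgrad F (x_sampled 1 s \<omega>) (pi 1 s j \<omega>)"
    using cut_subgrad[of 1 s j \<omega>] s j unfolding F_def by simp
  obtain a where a: "F (x_sampled 1 s \<omega>) = ereal a"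
    using is_subgrad_finite[OF sg] by blast
  have "ereal (a + pi 1 s j \<omega> \<bullet> (y - x_sampled 1 s \<omega>)) \<le> F y"
    using is_subgrad_le[OF sg, of y] a by simp
  also have "\<dots> \<le> Qinf f Xf (Q (Suc s)) s y (xi s j)"
    unfolding F_def by (rule Qinf_mono) (use Qk_le_Q s in auto)
  finally show ?thesis by auto
qed

lemma weighted_Qinf_Q_neq_MInfty:
  "s \<in> {2..T} \<Longrightarrow> j < M \<Longrightarrow> ereal (p s j) * Qinf f Xf (Q (Suc s)) s y (xi s j) \<noteq> -\<infinity>"
  using p_pos[of s j] Qinf_Q_neq_MInfty[of s j y] by simp

lemma Q_neq_MInfty: "s \<in> {2..Suc T} \<Longrightarrow> Q s y \<noteq> -\<infinity>"
proof (cases "s = Suc T")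
  case False
  assume "s \<in> {2..Suc T}"
  with False have s: "s \<in> {2..T}" by auto
  have "(\<Sum>j<M. ereal (p s j) * Qinf f Xf (Q (Suc s)) s y (xi s j)) \<noteq> -\<infinity>"
    using weighted_Qinf_Q_neq_MInfty[OF s] by (intro sum_ereal_neq_MInfty) auto
  then show ?thesis using Q_rec[OF s] by simp
qed (simp add: Q_last)

lemma Q_finite_near: "s \<in> {2..Suc T} \<Longrightarrow> \<exists>e>0. \<forall>y\<in>fatten (Xs (s - 1)) e. Q s y < \<infinity>"
proof -
  assume "s \<in> {2..Suc T}"
  then have two: "2 \<le> s" and le: "s \<le> Suc T" by auto
  from le show ?thesis
  proof (induction rule: inc_induct)
    case base
    show ?case by (auto simp: Q_last intro!: exI[of _ 1])
  next
    case (step n)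
    then have n: "n \<in> {2..T}" using two by auto
    obtain e' where "e' > 0" and Q_next: "\<forall>z\<in>fatten (Xs n) e'. Q (Suc n) z < \<infinity>"
      using step.IH by auto
    then have Q_next_fin: "Q (Suc n) z < \<infinity>" if "z \<in> Xs n" for z
      using that fatten_subset[of e' "Xs n"] by auto
    obtain \<epsilon> where "\<epsilon> > 0" and \<epsilon>: "\<forall>j<M. \<forall>y\<in>fatten (Xs (n - 1)) \<epsilon>.
        Xf n y (xi n j) \<noteq> {} \<and> (\<forall>z\<in>Xs n. f n y z (xi n j) < \<infinity>)"
      using f_finite_near[OF n] by blast
    have "Q n y < \<infinity>" if y: "y \<in> fatten (Xs (n - 1)) \<epsilon>" for y
    proof -
      have term_fin: "ereal (p n j) * Qinf f Xf (Q (Suc n)) n y (xi n j) < \<infinity>" if "j \<in> {..<M}" for j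
      proof -
        from that have j: "j < M" by simp
        obtain z where z: "z \<in> Xf n y (xi n j)" using \<epsilon> y j by blast
        then have "z \<in> Xs n" using Xf_subset by blast
        then have "f n y z (xi n j) + Q (Suc n) z < \<infinity>"
          using \<epsilon> y j Q_next_fin by (simp add: ereal_add_strict_mono2)
        then have "Qinf f Xf (Q (Suc n)) n y (xi n j) < \<infinity>"
          unfolding Qinf_def using z by (meson INF_lower le_less_trans)
        then show ?thesis using p_pos[OF n j] by (cases "Qinf f Xf (Q (Suc n)) n y (xi n j)") auto
      qed
      have "Q n y = (\<Sum>j<M. ereal (p n j) * Qinf f Xf (Q (Suc n)) n y (xi n j))"
        by (rule Q_rec[OF n])
      also have "\<dots> < \<infinity>" by (rule sum_ereal_less_PInfty) (rule term_fin)
      finally show ?thesis .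
    qed
    then show ?case using \<open>\<epsilon> > 0\<close> by blast
  qed
qed

lemma Q_convex: "s \<in> {2..Suc T} \<Longrightarrow> convex_ef (Q s)"
proof -
  assume "s \<in> {2..Suc T}"
  then have two: "2 \<le> s" and le: "s \<le> Suc T" by auto
  from le show ?thesis
  proof (induction rule: inc_induct)
    case base
    show ?case by (simp add: Q_last convex_ef_def)
  next
    case (step n)
    then have n: "n \<in> {2..T}" using two by auto
    have "convex_ef (\<lambda>y. Qinf f Xf (Q (Suc n)) n y (xi n j))" if j: "j < M" for j
      unfolding Qinf_def
    proof (rule convex_ef_INF_graph)
      show "convex_ef (\<lambda>(y, z). f n y z (xi n j))" by (rule f_convex[OF n j])
      show "f n y z (xi n j) \<noteq> -\<infinity>" for y z by (rule f_neq_MInfty[OF n j])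
      show "convex_ef (Q (Suc n))" by (rule step.IH)
      show "Q (Suc n) z \<noteq> -\<infinity>" for z using n by (intro Q_neq_MInfty) auto
      show "convex {(y, z). z \<in> Xf n y (xi n j)}" by (rule Xf_graph_convex[OF n j])
      show "(INF z\<in>Xf n y (xi n j). f n y z (xi n j) + Q (Suc n) z) \<noteq> -\<infinity>" for y
        using Qinf_Q_neq_MInfty[OF n j] unfolding Qinf_def .
    qed
    then have "convex_ef (\<lambda>y. \<Sum>j<M. ereal (p n j) * Qinf f Xf (Q (Suc n)) n y (xi n j))"
      using p_pos[OF n] Qinf_Q_neq_MInfty[OF n] weighted_Qinf_Q_neq_MInfty[OF n]
      by (intro convex_ef_sum convex_ef_cmult) (auto simp: less_imp_le)
    then show ?case using Q_rec[OF n] by presburger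
  qed
qed

definition Q_real :: "nat \<Rightarrow> 'a \<Rightarrow> real"
  where "Q_real s y = real_of_ereal (Q s y)"

lemma Q_real_near:
  assumes s: "s \<in> {2..T}"
  obtains e where "0 < e" "\<And>y. y \<in> fatten (Xs (s - 1)) e \<Longrightarrow> Q s y = ereal (Q_real s y)"
    "continuous_on (fatten (Xs (s - 1)) e) (Q_real s)"
proof -
  have "s \<in> {2..Suc T}" using s by auto
  then obtain e where "0 < e" and e: "\<forall>y\<in>fatten (Xs (s - 1)) e. Q s y < \<infinity>"
    using Q_finite_near by blast
  define U where "U = interior (fatten (Xs (s - 1)) e)"
  have fin: "\<bar>Q s y\<bar> \<noteq> \<infinity>" if "y \<in> U" for y
    using that e interior_subset[of "fatten (Xs (s - 1)) e"] Q_neq_MInfty[of s y] s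
    unfolding U_def by fastforce
  have "convex U"
    unfolding U_def using s by (intro convex_interior convex_fatten Xs_convex) auto
  then have "convex_on U (Q_real s)"
    unfolding Q_real_def using Q_convex s fin by (intro convex_on_real_of_ereal) auto
  then have cont: "continuous_on U (Q_real s)"
    by (intro convex_on_continuous) (auto simp: U_def)
  have sub: "fatten (Xs (s - 1)) (e / 2) \<subseteq> U"
  proof
    fix y assume "y \<in> fatten (Xs (s - 1)) (e / 2)"
    then obtain x0 where "x0 \<in> Xs (s - 1)" "dist x0 y \<le> e / 2" by (auto simp: mem_fatten)
    then have "ball y (e / 2) \<subseteq> fatten (Xs (s - 1)) e"
    proof (intro subsetI)
      fix z assume "z \<in> ball y (e / 2)"
      then have "dist x0 z \<le> e" using \<open>dist x0 y \<le> e / 2\<close> dist_triangle[of x0 z y] by simp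
      with \<open>x0 \<in> Xs (s - 1)\<close> show "z \<in> fatten (Xs (s - 1)) e" by (auto simp: mem_fatten)
    qed
    then show "y \<in> U" unfolding U_def using \<open>0 < e\<close> by (intro interiorI[of "ball y (e / 2)"]) auto
  qed
  show ?thesis
  proof
    show "0 < e / 2" using \<open>0 < e\<close> by simp
    show "Q s y = ereal (Q_real s y)" if "y \<in> fatten (Xs (s - 1)) (e / 2)" for y
      using fin[OF subsetD[OF sub that]] unfolding Q_real_def by (cases "Q s y") auto
    show "continuous_on (fatten (Xs (s - 1)) (e / 2)) (Q_real s)"
      using cont sub by (rule continuous_on_subset)
  qed
qed

lemma Q_eq_Q_real: "s \<in> {2..T} \<Longrightarrow> y \<in> Xs (s - 1) \<Longrightarrow> Q s y = ereal (Q_real s y)"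
  by (metis Q_real_near fatten_subset less_imp_le subsetD)

lemma Q_real_uniformly_continuous:
  assumes s: "s \<in> {2..T}"
  shows "uniformly_continuous_on (Xs (s - 1)) (Q_real s)"
proof -
  obtain e where "0 < e" "continuous_on (fatten (Xs (s - 1)) e) (Q_real s)"
    using Q_real_near s by blast
  then have "continuous_on (Xs (s - 1)) (Q_real s)"
    using fatten_subset continuous_on_subset by (metis less_imp_le)
  moreover have "compact (Xs (s - 1))" using s by (intro Xs_compact) auto
  ultimately show ?thesis by (intro compact_uniformly_continuous)
qed

lemma Q_bounded_near:
  assumes s: "s \<in> {2..T}"
  obtains e U where "0 < e" "\<And>y. y \<in> fatten (Xs (s - 1)) e \<Longrightarrow> Q s y \<le> ereal U"
proof -
  obtain e where e: "0 < e" "\<And>y. y \<in> fatten (Xs (s - 1)) e \<Longrightarrow> Q s y = ereal (Q_real s y)"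
    and cont: "continuous_on (fatten (Xs (s - 1)) e) (Q_real s)"
    using Q_real_near s by blast
  have "compact (fatten (Xs (s - 1)) e)" using s by (intro compact_fatten Xs_compact) auto
  then have "compact (Q_real s ` fatten (Xs (s - 1)) e)" using compact_continuous_image[OF cont] by blast
  then obtain U where "\<forall>v\<in>Q_real s ` fatten (Xs (s - 1)) e. norm v \<le> U"
    using compact_imp_bounded bounded_iff by metis
  then have "Q s y \<le> ereal U" if "y \<in> fatten (Xs (s - 1)) e" for y
    using that e(2)[OF that] by auto
  with e(1) show ?thesis by (rule that)
qed


definition samples_in_range :: "'w \<Rightarrow> bool"
  where "samples_in_range \<omega> \<longleftrightarrow> (\<forall>k\<ge>1. \<forall>s\<in>{2..T}. J k s \<omega> < M)"

lemma x_sampled_in_Xs: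
  assumes "samples_in_range \<omega>" "1 \<le> k" "s \<in> {2..T}"
  shows "x_sampled k s \<omega> \<in> Xs (s - 1)"
proof -
  have len: "length (sampled_node J k (s - 1) \<omega>) = s - 2" and "set (sampled_node J k (s - 1) \<omega>) \<subseteq> {..<M}"
    using assms unfolding samples_in_range_def sampled_node_def by auto
  then have "x_sampled k s \<omega> \<in> Xs (length (sampled_node J k (s - 1) \<omega>) + 1)"
    unfolding x_sampled_def using assms(3) by (intro x_in_Xs[OF assms(2)]) auto
  moreover have "length (sampled_node J k (s - 1) \<omega>) + 1 = s - 1" using len assms(3) by auto
  ultimately show ?thesis by simp
qed

lemma x_node_in_Xs:
  assumes "1 \<le> k" "s \<in> {2..T}" "n \<in> tree_nodes M (s - 1)"
  shows "x k n \<omega> \<in> Xs (s - 1)"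
proof -
  have len: "length n = s - 2" and "set n \<subseteq> {..<M}" using assms(3) by (auto simp: tree_nodes_def)
  then have "x k n \<omega> \<in> Xs (length n + 1)" using assms(2) by (intro x_in_Xs[OF assms(1)]) auto
  moreover have "length n + 1 = s - 1" using len assms(2) by auto
  ultimately show ?thesis by simp
qed

lemma cut_value_lower_bound:
  assumes \<omega>: "samples_in_range \<omega>" and s: "s \<in> {2..T}"
  obtains l where "\<And>k. 1 \<le> k \<Longrightarrow> ereal l \<le> cut_value k s \<omega>"
proof -
  obtain B where B: "\<forall>y\<in>Xs (s - 1). norm y \<le> B"
    using s Xs_compact[of "s - 1"] compact_imp_bounded bounded_iff by fastforce
  define x1 where "x1 = x_sampled 1 s \<omega>"
  define F where "F j z = Qinf f Xf (Qk 1 (Suc s) \<omega>) s z (xi s j)" for j z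
  define v where "v j = real_of_ereal (F j x1)" for j
  have sg: "is_subgrad (F j) x1 (pi 1 s j \<omega>)" if "j < M" for j
    using cut_subgrad[OF _ s that] unfolding F_def x1_def by simp
  have Fv: "F j x1 = ereal (v j)" if "j < M" for j
    using is_subgrad_finite[OF sg[OF that]] unfolding v_def by simp
  have x1_in: "x1 \<in> Xs (s - 1)" unfolding x1_def using x_sampled_in_Xs[OF \<omega> _ s] by simp
  show ?thesis
  proof
    fix k :: nat assume k: "1 \<le> k"
    have xk_in: "x_sampled k s \<omega> \<in> Xs (s - 1)" using x_sampled_in_Xs[OF \<omega> k s] .
    have "ereal (v j - norm (pi 1 s j \<omega>) * (2 * B))
        \<le> Qinf f Xf (Qk k (Suc s) \<omega>) s (x_sampled k s \<omega>) (xi s j)" if j: "j < M" for j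
    proof -
      have "norm (x_sampled k s \<omega>) \<le> B" "norm x1 \<le> B" using B xk_in x1_in by auto
      then have "norm (x_sampled k s \<omega> - x1) \<le> 2 * B"
        using norm_triangle_ineq4[of "x_sampled k s \<omega>" x1] by linarith
      then have "norm (pi 1 s j \<omega>) * norm (x_sampled k s \<omega> - x1) \<le> norm (pi 1 s j \<omega>) * (2 * B)"
        by (rule mult_left_mono) simp
      then have "- (norm (pi 1 s j \<omega>) * (2 * B)) \<le> pi 1 s j \<omega> \<bullet> (x_sampled k s \<omega> - x1)"
        using abs_le_D2[OF Cauchy_Schwarz_ineq2[of "pi 1 s j \<omega>" "x_sampled k s \<omega> - x1"]] by linarith
      then have "ereal (v j - norm (pi 1 s j \<omega>) * (2 * B))
          \<le> F j x1 + ereal (pi 1 s j \<omega> \<bullet> (x_sampled k s \<omega> - x1))"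
        using Fv[OF j] by simp
      also have "\<dots> \<le> F j (x_sampled k s \<omega>)" by (rule is_subgrad_le[OF sg[OF j]])
      also have "\<dots> \<le> Qinf f Xf (Qk k (Suc s) \<omega>) s (x_sampled k s \<omega>) (xi s j)"
        unfolding F_def by (rule Qinf_mono) (use Qk_mono s k in auto)
      finally show ?thesis .
    qed
    then have "(\<Sum>j<M. ereal (p s j) * ereal (v j - norm (pi 1 s j \<omega>) * (2 * B))) \<le> cut_value k s \<omega>"
      unfolding cut_value_def using p_pos[OF s]
      by (intro sum_mono ereal_mult_left_mono) (auto simp: less_imp_le)
    then show "ereal (\<Sum>j<M. p s j * (v j - norm (pi 1 s j \<omega>) * (2 * B))) \<le> cut_value k s \<omega>"
      by simp
  qed
qed

lemma cut_slope_bounded: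
  assumes \<omega>: "samples_in_range \<omega>" and s: "s \<in> {2..T}"
  obtains L where "\<And>k. 1 \<le> k \<Longrightarrow> norm (cut_slope k s \<omega>) \<le> L"
proof -
  obtain l where l: "\<And>k. 1 \<le> k \<Longrightarrow> ereal l \<le> cut_value k s \<omega>"
    using cut_value_lower_bound[OF \<omega> s] by blast
  obtain e U where e: "0 < e" and U: "\<And>y. y \<in> fatten (Xs (s - 1)) e \<Longrightarrow> Q s y \<le> ereal U"
    using Q_bounded_near[OF s] by blast
  have "norm (cut_slope k s \<omega>) \<le> (U - l) / e" if k: "1 \<le> k" for k
  proof -
    define \<beta> where "\<beta> = cut_slope k s \<omega>"
    \<comment> \<open>for \<open>\<beta> = 0\<close> the junk value \<open>e / 0 = 0\<close> gives \<open>z = x_sampled k s \<omega>\<close>\<close>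
    define z where "z = x_sampled k s \<omega> + (e / norm \<beta>) *\<^sub>R \<beta>"
    have "norm ((e / norm \<beta>) *\<^sub>R \<beta>) \<le> e" using e by (cases "\<beta> = 0") auto
    then have "z \<in> fatten (Xs (s - 1)) e"
      using x_sampled_in_Xs[OF \<omega> k s] unfolding z_def by (auto simp: mem_fatten dist_norm intro!: bexI)
    have step: "\<beta> \<bullet> (z - x_sampled k s \<omega>) = e * norm \<beta>"
      unfolding z_def by (cases "\<beta> = 0") (simp_all add: power2_norm_eq_inner[symmetric] power2_eq_square)
    have "ereal (l + e * norm \<beta>) = ereal l + ereal (e * norm \<beta>)" by simp
    also have "\<dots> \<le> cut_value k s \<omega> + ereal (e * norm \<beta>)" using l[OF k] by (rule add_right_mono)
    also have "\<dots> = cut k s \<omega> z" unfolding cut_def \<beta>_def[symmetric] step ..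
    also have "\<dots> \<le> Qk k s \<omega> z" using cut_le_Qk[OF k s] .
    also have "\<dots> \<le> Q s z" using Qk_le_Q s by simp
    also have "\<dots> \<le> ereal U" using U \<open>z \<in> fatten (Xs (s - 1)) e\<close> .
    finally show ?thesis using e unfolding \<beta>_def by (simp add: field_simps)
  qed
  then show ?thesis by (rule that)
qed

subsection \<open>Sampling\<close>

lemma samples_agree_mono: "samples_agree J T k \<omega> \<omega>' \<Longrightarrow> k' \<le> k \<Longrightarrow> samples_agree J T k' \<omega> \<omega>'"
  unfolding samples_agree_def by auto

lemma sampled_node_agree:
  "samples_agree J T (Suc k) \<omega> \<omega>' \<Longrightarrow> 1 \<le> k \<Longrightarrow> s \<le> T \<Longrightarrow> sampled_node J k s \<omega> = sampled_node J k s \<omega>'"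
  unfolding samples_agree_def sampled_node_def by auto

lemma cut_determined:
  assumes agree: "samples_agree J T (Suc k) \<omega> \<omega>'" and k: "1 \<le> k" and s: "s \<in> {2..T}"
    and next_stage: "Qk k (Suc s) \<omega> = Qk k (Suc s) \<omega>'"
  shows "cut k s \<omega> = cut k s \<omega>'"
proof -
  have "s - 1 \<le> T" using s by auto
  then have "sampled_node J k (s - 1) \<omega> = sampled_node J k (s - 1) \<omega>'"
    using sampled_node_agree[OF agree k] by simp
  moreover have "x k m \<omega> = x k m \<omega>'" for m
    using x_adapted[OF k samples_agree_mono[OF agree]] by simp
  ultimately have "x_sampled k s \<omega> = x_sampled k s \<omega>'"
    unfolding x_sampled_def by simp
  moreover have "pi k s j \<omega> = pi k s j \<omega>'" for j
    using pi_adapted[OF k agree] .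
  ultimately show ?thesis
    unfolding cut_def[abs_def] cut_value_def cut_slope_def next_stage by simp
qed

lemma Qk_determined:
  "samples_agree J T (Suc k) \<omega> \<omega>' \<Longrightarrow> s \<in> {2..Suc T} \<Longrightarrow> Qk k s \<omega> = Qk k s \<omega>'"
proof (induction k arbitrary: s)
  case 0
  then show ?case by (cases "s = Suc T") (simp_all add: fun_eq_iff Qk_last Qk_0)
next
  case (Suc k)
  have agree_k: "samples_agree J T (Suc k) \<omega> \<omega>'"
    using Suc.prems(1) by (rule samples_agree_mono) simp
  from Suc.prems(2) have two: "2 \<le> s" and le: "s \<le> Suc T" by auto
  from le show ?case
  proof (induction rule: inc_induct)
    case base
    show ?case by (simp add: fun_eq_iff Qk_last)
  next
    case (step n)
    then have n: "n \<in> {2..T}" using two by auto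
    have "cut (Suc k) n \<omega> = cut (Suc k) n \<omega>'"
      by (rule cut_determined[OF Suc.prems(1) _ n step.IH]) simp
    moreover have "Qk k n \<omega> = Qk k n \<omega>'" using Suc.IH[OF agree_k] n by simp
    ultimately show ?case using Qk_update[of "Suc k" n] n by (simp add: fun_eq_iff)
  qed
qed

definition past_generators :: "nat \<Rightarrow> nat \<Rightarrow> 'w set set"
  where "past_generators k r = {J k' s' -` {j} \<inter> space PS | j k' s'.
            (1 \<le> k' \<and> k' < k \<and> s' \<in> {2..T}) \<or> (k' = k \<and> s' \<in> {2..<r})}"

lemma past_event:
  assumes determined: "\<And>\<omega> \<omega>'. samples_agree J T k \<omega> \<omega>' \<Longrightarrow> (\<forall>s\<in>{2..<r}. J k s \<omega> = J k s \<omega>') \<Longrightarrow> P \<omega> = P \<omega>'"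
  shows "{\<omega> \<in> space PS. P \<omega>} \<in> sigma_sets (space PS) (past_generators k r)"
proof (rule sigma_sets_determined[where X = "\<lambda>(k', s'). J k' s'"
      and I = "List.product [1..<k] [2..<Suc T] @ map (Pair k) [2..<r]"])
  fix \<omega> \<omega>'
  assume "\<forall>i\<in>set (List.product [1..<k] [2..<Suc T] @ map (Pair k) [2..<r]).
      (case i of (k', s') \<Rightarrow> J k' s') \<omega> = (case i of (k', s') \<Rightarrow> J k' s') \<omega>'"
  then have agree: "J a b \<omega> = J a b \<omega>'"
    if "(a, b) \<in> set (List.product [1..<k] [2..<Suc T] @ map (Pair k) [2..<r])" for a b
    using that by fastforce
  have "samples_agree J T k \<omega> \<omega>'"
    unfolding samples_agree_def
  proof (intro ballI)
    fix k' s assume "k' \<in> {1..<k}" "s \<in> {2..T}"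
    then show "J k' s \<omega> = J k' s \<omega>'" by (intro agree) auto
  qed
  moreover have "\<forall>s\<in>{2..<r}. J k s \<omega> = J k s \<omega>'"
    by (auto intro: agree)
  ultimately show "P \<omega> = P \<omega>'" by (rule determined)
next
  fix i v assume i: "i \<in> set (List.product [1..<k] [2..<Suc T] @ map (Pair k) [2..<r])"
  obtain a b where ab: "i = (a, b)" by fastforce
  from i have "(1 \<le> a \<and> a < k \<and> b \<in> {2..T}) \<or> (a = k \<and> b \<in> {2..<r})"
    unfolding ab by auto
  then have "J a b -` {v} \<inter> space PS \<in> past_generators k r"
    unfolding past_generators_def by blast
  then show "(case i of (k', s') \<Rightarrow> J k' s') -` {v} \<inter> space PS \<in> past_generators k r"
    unfolding ab by simp
next
  show "past_generators k r \<subseteq> Pow (space PS)"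
    unfolding past_generators_def by blast
qed

lemma determined_event:
  assumes "\<And>\<omega> \<omega>'. samples_agree J T k \<omega> \<omega>' \<Longrightarrow> P \<omega> = P \<omega>'"
  shows "{\<omega> \<in> space PS. P \<omega>} \<in> events"
proof -
  have "past_generators k 2 \<subseteq> events"
  proof
    fix A assume "A \<in> past_generators k 2"
    then obtain j k' s' where A: "A = J k' s' -` {j} \<inter> space PS" and "1 \<le> k'" "s' \<in> {2..T}"
      unfolding past_generators_def by auto
    then show "A \<in> events" using measurable_sets[OF J_measurable] by simp
  qed
  moreover have "{\<omega> \<in> space PS. P \<omega>} \<in> sigma_sets (space PS) (past_generators k 2)"
    using assms by (intro past_event) simp
  ultimately show ?thesis using sets.sigma_sets_subset by blast
qed

definition node_prob :: "nat list \<Rightarrow> real"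
  where "node_prob n = (\<Prod>i<length n. p (i + 2) (n ! i))"

lemma node_prob_pos:
  assumes "length n < T" "set n \<subseteq> {..<M}"
  shows "0 < node_prob n"
proof -
  have "n ! i < M" if "i < length n" for i using assms(2) nth_mem[OF that] by blast
  then show ?thesis unfolding node_prob_def using assms(1) by (intro prod_pos p_pos) auto
qed

lemma sampled_node_eq_iff:
  "sampled_node J k (length n + 1) \<omega> = n \<longleftrightarrow> (\<forall>i<length n. J k (i + 2) \<omega> = n ! i)"
  unfolding sampled_node_def list_eq_iff_nth_eq by (auto simp del: upt_Suc simp: add.commute)

lemma prob_sampled_node:
  assumes k: "1 \<le> k" and n: "length n < T" "set n \<subseteq> {..<M}"
    and P: "\<And>\<omega> \<omega>'. samples_agree J T k \<omega> \<omega>' \<Longrightarrow> P \<omega> = P \<omega>'"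
  shows "prob {\<omega> \<in> space PS. P \<omega> \<and> sampled_node J k (length n + 1) \<omega> = n}
    = prob {\<omega> \<in> space PS. P \<omega>} * node_prob n"
proof -
  have "prob {\<omega> \<in> space PS. P \<omega> \<and> (\<forall>i<d. J k (i + 2) \<omega> = n ! i)}
      = prob {\<omega> \<in> space PS. P \<omega>} * (\<Prod>i<d. p (i + 2) (n ! i))" if "d \<le> length n" for d
    using that
  proof (induction d)
    case (Suc d)
    define S where "S = {\<omega> \<in> space PS. P \<omega> \<and> (\<forall>i<d. J k (i + 2) \<omega> = n ! i)}"
    define E where "E = J k (d + 2) -` {n ! d} \<inter> space PS"
    have s: "d + 2 \<in> {2..T}" using Suc.prems n by auto
    have "n ! d \<in> set n" using Suc.prems by (intro nth_mem) simp
    then have nd: "n ! d < M" using n(2) by auto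
    have "{\<omega> \<in> space PS. P \<omega> \<and> (\<forall>i<Suc d. J k (i + 2) \<omega> = n ! i)} = E \<inter> S"
      unfolding S_def E_def by (auto simp: less_Suc_eq)
    moreover have "prob (E \<inter> S) = prob E * prob S"
    proof (rule indep_setD[OF J_indep[OF k s]])
      show "E \<in> sigma_sets (space PS) {J k (d + 2) -` {j} \<inter> space PS | j. True}"
        unfolding E_def by (intro sigma_sets.Basic) auto
      have "S \<in> sigma_sets (space PS) (past_generators k (d + 2))"
        unfolding S_def by (rule past_event) (auto simp: P)
      then show "S \<in> sigma_sets (space PS) {J k' s' -` {j} \<inter> space PS | j k' s'.
          (1 \<le> k' \<and> k' < k \<and> s' \<in> {2..T}) \<or> (k' = k \<and> s' \<in> {2..<d + 2})}"
        unfolding past_generators_def .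
    qed
    moreover have "prob E = p (d + 2) (n ! d)"
      unfolding E_def using J_distr[OF k s nd] by (simp add: vimage_def Int_def conj_commute)
    ultimately show ?case using Suc by (simp add: S_def)
  qed simp
  from this[of "length n"] show ?thesis
    unfolding sampled_node_eq_iff node_prob_def by simp
qed

lemma AE_samples_in_range: "AE \<omega> in PS. samples_in_range \<omega>"
proof -
  have "prob {\<omega> \<in> space PS. J k s \<omega> < M} = 1" if k: "1 \<le> k" and s: "s \<in> {2..T}" for k s
  proof -
    have eq: "{\<omega> \<in> space PS. J k s \<omega> < M} = (\<Union>j<M. {\<omega> \<in> space PS. J k s \<omega> = j})" by auto
    have "{\<omega> \<in> space PS. J k s \<omega> = j} \<in> events" for j
    proof -
      have "{\<omega> \<in> space PS. J k s \<omega> = j} = J k s -` {j} \<inter> space PS" by auto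
      then show ?thesis by (simp add: measurable_sets[OF J_measurable[OF k s]])
    qed
    then have "prob (\<Union>j<M. {\<omega> \<in> space PS. J k s \<omega> = j}) = (\<Sum>j<M. prob {\<omega> \<in> space PS. J k s \<omega> = j})"
      by (intro finite_measure_finite_Union) (auto simp: disjoint_family_on_def)
    also have "\<dots> = 1" using J_distr[OF k s] p_sum[OF s] by simp
    finally show ?thesis unfolding eq .
  qed
  then have "AE \<omega> in PS. J k s \<omega> < M" if "1 \<le> k" "s \<in> {2..T}" for k s
    using AE_prob_1[of "{\<omega> \<in> space PS. J k s \<omega> < M}"] that by auto
  then have "AE \<omega> in PS. \<forall>(k, s) \<in> {1..} \<times> {2..T}. J k s \<omega> < M"
    by (subst AE_ball_countable) auto
  then show ?thesis
    unfolding samples_in_range_def by eventually_elim auto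
qed


subsection \<open>Gaps at the iterates of a node\<close>

definition gap :: "nat \<Rightarrow> nat \<Rightarrow> 'w \<Rightarrow> 'a \<Rightarrow> real"
  where "gap k s \<omega> y = Q_real s y - real_of_ereal (Qk k s \<omega> y)"

lemma Qk_eq_gap:
  assumes k: "1 \<le> k" and s: "s \<in> {2..T}" and y: "y \<in> Xs (s - 1)"
  shows "Qk k s \<omega> y = ereal (Q_real s y - gap k s \<omega> y)" and "0 \<le> gap k s \<omega> y"
proof -
  have "cut k s \<omega> y \<le> Qk k s \<omega> y" by (rule cut_le_Qk[OF k s])
  then have lower: "Qk k s \<omega> y \<noteq> -\<infinity>" using cut_eq_affine[OF k s, of \<omega> y] by auto
  have upper: "Qk k s \<omega> y \<le> ereal (Q_real s y)"
    using Qk_le_Q[of s k \<omega> y] s Q_eq_Q_real[OF s y] by simp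
  from lower upper show "Qk k s \<omega> y = ereal (Q_real s y - gap k s \<omega> y)" "0 \<le> gap k s \<omega> y"
    unfolding gap_def by (cases "Qk k s \<omega> y"; simp)+
qed

lemma Q_minus_Qk_eq_gap:
  "1 \<le> k \<Longrightarrow> s \<in> {2..T} \<Longrightarrow> y \<in> Xs (s - 1) \<Longrightarrow> Q s y - Qk k s \<omega> y = ereal (gap k s \<omega> y)"
  using Qk_eq_gap(1) Q_eq_Q_real by simp

lemma gap_after_active_cut:
  assumes k: "1 \<le> k1" "k1 \<le> k2" and s: "s \<in> {2..T}" and y: "y1 \<in> Xs (s - 1)" "y2 \<in> Xs (s - 1)"
    and active: "Qk (k1 - 1) s \<omega> y1 < Qk k1 s \<omega> y1"
  shows "gap k2 s \<omega> y2 \<le> gap k1 s \<omega> y1 + (Q_real s y2 - Q_real s y1) + norm (cut_slope k1 s \<omega>) * dist y1 y2"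
proof -
  define v where "v = real_of_ereal (cut_value k1 s \<omega>)"
  define \<beta> where "\<beta> = cut_slope k1 s \<omega>"
  define x1 where "x1 = x_sampled k1 s \<omega>"
  have cut: "cut k1 s \<omega> y = ereal (v + \<beta> \<bullet> (y - x1))" for y
    unfolding v_def \<beta>_def x1_def by (rule cut_eq_affine[OF k(1) s])
  have "Qk k1 s \<omega> y1 = cut k1 s \<omega> y1"
    using active Qk_update[OF k(1) s, of \<omega> y1] by (auto simp: max_def split: if_splits)
  then have at_y1: "Q_real s y1 - gap k1 s \<omega> y1 = v + \<beta> \<bullet> (y1 - x1)"
    using Qk_eq_gap(1)[OF k(1) s y(1)] cut by simp
  have "cut k1 s \<omega> y2 \<le> Qk k1 s \<omega> y2" by (rule cut_le_Qk[OF k(1) s])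
  also have "\<dots> \<le> Qk k2 s \<omega> y2" using Qk_mono[of s k1 k2] s k(2) by simp
  finally have at_y2: "v + \<beta> \<bullet> (y2 - x1) \<le> Q_real s y2 - gap k2 s \<omega> y2"
    using Qk_eq_gap(1)[OF _ s y(2), of k2] k cut by simp
  have "- (\<beta> \<bullet> (y2 - y1)) \<le> norm \<beta> * norm (y2 - y1)"
    by (rule abs_le_D2[OF Cauchy_Schwarz_ineq2])
  then have "- (\<beta> \<bullet> (y2 - y1)) \<le> norm \<beta> * dist y1 y2"
    by (simp add: dist_norm norm_minus_commute)
  moreover have "\<beta> \<bullet> (y2 - x1) = \<beta> \<bullet> (y2 - y1) + \<beta> \<bullet> (y1 - x1)" by (simp add: inner_diff_right)
  ultimately show ?thesis using at_y1 at_y2 unfolding \<beta>_def by linarith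
qed

lemma gap_propagation:
  assumes \<omega>: "samples_in_range \<omega>" and s: "s \<in> {2..T}" and e: "0 < e"
  obtains r where "0 < r"
    "\<And>k1 k2 y1 y2. 1 \<le> k1 \<Longrightarrow> k1 \<le> k2 \<Longrightarrow> y1 \<in> Xs (s - 1) \<Longrightarrow> y2 \<in> Xs (s - 1) \<Longrightarrow>
      dist y1 y2 < r \<Longrightarrow> Qk (k1 - 1) s \<omega> y1 < Qk k1 s \<omega> y1 \<Longrightarrow> gap k2 s \<omega> y2 < gap k1 s \<omega> y1 + e"
proof -
  obtain L where L: "\<And>k. 1 \<le> k \<Longrightarrow> norm (cut_slope k s \<omega>) \<le> L"
    using cut_slope_bounded[OF \<omega> s] by blast
  obtain \<delta> where "0 < \<delta>" and \<delta>: "\<forall>y1\<in>Xs (s - 1). \<forall>y2\<in>Xs (s - 1).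
      dist y2 y1 < \<delta> \<longrightarrow> dist (Q_real s y2) (Q_real s y1) < e / 2"
    using Q_real_uniformly_continuous[OF s] e unfolding uniformly_continuous_on_def
    by (meson half_gt_zero)
  define r where "r = min \<delta> (e / (2 * (\<bar>L\<bar> + 1)))"
  show ?thesis
  proof
    show "0 < r" using \<open>0 < \<delta>\<close> e unfolding r_def by auto
    fix k1 k2 y1 y2
    assume k: "1 \<le> k1" "k1 \<le> k2" and y: "y1 \<in> Xs (s - 1)" "y2 \<in> Xs (s - 1)"
      and d: "dist y1 y2 < r" and active: "Qk (k1 - 1) s \<omega> y1 < Qk k1 s \<omega> y1"
    have "dist y2 y1 < \<delta>" using d unfolding r_def by (simp add: dist_commute)
    then have "\<bar>Q_real s y2 - Q_real s y1\<bar> < e / 2" using \<delta> y unfolding dist_real_def by blast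
    moreover have "Q_real s y2 - Q_real s y1 \<le> \<bar>Q_real s y2 - Q_real s y1\<bar>" by (rule abs_ge_self)
    moreover have "norm (cut_slope k1 s \<omega>) * dist y1 y2 \<le> (\<bar>L\<bar> + 1) * r"
      using L[OF k(1)] d by (intro mult_mono) auto
    moreover have "(\<bar>L\<bar> + 1) * r \<le> e / 2"
    proof -
      have "(\<bar>L\<bar> + 1) * r \<le> (\<bar>L\<bar> + 1) * (e / (2 * (\<bar>L\<bar> + 1)))"
        unfolding r_def by (intro mult_left_mono) auto
      also have "\<dots> = e / 2" by (simp add: field_simps add_pos_nonneg)
      finally show ?thesis .
    qed
    ultimately show "gap k2 s \<omega> y2 < gap k1 s \<omega> y1 + e"
      using gap_after_active_cut[OF k s y active] by linarith
  qed
qed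

text \<open>The iterate of iteration \<open>k + 1\<close> and the model after iteration \<open>k\<close> are both determined by the
  samples of iterations \<open>1, \<dots>, k\<close>, i.e.\ before the sampling of iteration \<open>k + 1\<close>.\<close>

definition large_gap_near :: "nat \<Rightarrow> nat list \<Rightarrow> 'a \<Rightarrow> real \<Rightarrow> real \<Rightarrow> nat \<Rightarrow> 'w \<Rightarrow> bool"
  where "large_gap_near s n c r e k \<omega> \<longleftrightarrow>
    x (Suc k) n \<omega> \<in> ball c r \<and> ereal e \<le> Q s (x (Suc k) n \<omega>) - Qk k s \<omega> (x (Suc k) n \<omega>)"

lemma large_gap_near_determined:
  assumes "samples_agree J T (Suc k) \<omega> \<omega>'" "s \<in> {2..T}"
  shows "large_gap_near s n c r e k \<omega> = large_gap_near s n c r e k \<omega>'"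
  using x_adapted[OF _ assms(1), of n] Qk_determined[OF assms(1), of s] assms(2)
  unfolding large_gap_near_def by simp

lemma active_cut_at_revisit:
  assumes s: "s \<in> {2..T}" and n: "n \<in> tree_nodes M (s - 1)"
    and large: "large_gap_near s n c r e k \<omega>" and small: "gap (Suc k) s \<omega> (x (Suc k) n \<omega>) < e"
  shows "Qk k s \<omega> (x (Suc k) n \<omega>) < Qk (Suc k) s \<omega> (x (Suc k) n \<omega>)"
proof -
  define y where "y = x (Suc k) n \<omega>"
  have y_in: "y \<in> Xs (s - 1)" unfolding y_def using x_node_in_Xs[OF _ s n] by simp
  have "ereal e \<le> ereal (Q_real s y) - Qk k s \<omega> y"
    using large Q_eq_Q_real[OF s y_in] unfolding large_gap_near_def y_def by simp
  then have "Qk k s \<omega> y \<le> ereal (Q_real s y - e)"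
    by (cases "Qk k s \<omega> y") auto
  also have "\<dots> < ereal (Q_real s y - gap (Suc k) s \<omega> y)" using small unfolding y_def by simp
  also have "\<dots> = Qk (Suc k) s \<omega> y" using Qk_eq_gap(1)[OF _ s y_in] by simp
  finally show ?thesis unfolding y_def .
qed


lemma large_gap_near_of_gap:
  assumes s: "s \<in> {2..T}" and n: "n \<in> tree_nodes M (s - 1)"
    and "x (Suc k) n \<omega> \<in> ball c r" and "e \<le> gap (Suc k) s \<omega> (x (Suc k) n \<omega>)"
  shows "large_gap_near s n c r e k \<omega>"
proof -
  have y_in: "x (Suc k) n \<omega> \<in> Xs (s - 1)" using x_node_in_Xs[OF _ s n] by simp
  have "ereal e \<le> Q s (x (Suc k) n \<omega>) - Qk (Suc k) s \<omega> (x (Suc k) n \<omega>)"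
    using Q_minus_Qk_eq_gap[OF _ s y_in] assms(4) by simp
  also have "\<dots> \<le> Q s (x (Suc k) n \<omega>) - Qk k s \<omega> (x (Suc k) n \<omega>)"
    using Qk_mono[of s k "Suc k"] s by (intro ereal_minus_mono) auto
  finally show ?thesis using assms(3) unfolding large_gap_near_def by simp
qed

text \<open>A revisit of \<open>n\<close> with a small gap makes its cut active at an iterate in the ball; after that
  the gap at iterates in the ball stays below \<open>e\<close>.\<close>

lemma finitely_many_large_gaps_near:
  assumes s: "s \<in> {2..T}" and n: "n \<in> tree_nodes M (s - 1)" and e: "0 < e"
    and propagate: "\<And>k1 k2 y1 y2. 1 \<le> k1 \<Longrightarrow> k1 \<le> k2 \<Longrightarrow> y1 \<in> Xs (s - 1) \<Longrightarrow> y2 \<in> Xs (s - 1) \<Longrightarrow>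
      dist y1 y2 < 2 * r \<Longrightarrow> Qk (k1 - 1) s \<omega> y1 < Qk k1 s \<omega> y1 \<Longrightarrow> gap k2 s \<omega> y2 < gap k1 s \<omega> y1 + e / 2"
    and revisit: "(\<exists>\<^sub>\<infinity>k. large_gap_near s n c r e k \<omega>) \<Longrightarrow>
      (\<exists>\<^sub>\<infinity>k. large_gap_near s n c r e k \<omega> \<and> sampled_node J (Suc k) (s - 1) \<omega> = n)"
    and on_node: "((\<lambda>k. gap k s \<omega> (x k n \<omega>)) \<longlongrightarrow> 0)
      (sequentially \<sqinter> principal {k. 1 \<le> k \<and> sampled_node J k (s - 1) \<omega> = n})"
  shows "finite {k. 1 \<le> k \<and> x k n \<omega> \<in> ball c r \<and> e \<le> gap k s \<omega> (x k n \<omega>)}"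
proof (rule ccontr)
  define y where "y k = x k n \<omega>" for k
  define B where "B = {k. 1 \<le> k \<and> y k \<in> ball c r \<and> e \<le> gap k s \<omega> (y k)}"
  assume "infinite {k. 1 \<le> k \<and> x k n \<omega> \<in> ball c r \<and> e \<le> gap k s \<omega> (x k n \<omega>)}"
  then have B_unbounded: "\<exists>k\<ge>m. k \<in> B" for m
    unfolding B_def y_def infinite_nat_iff_unbounded_le by blast
  have y_in: "y k \<in> Xs (s - 1)" if "1 \<le> k" for k
    unfolding y_def using x_node_in_Xs[OF that s n] .
  have large: "large_gap_near s n c r e k \<omega>" if "Suc k \<in> B" for k
  proof -
    from that have "x (Suc k) n \<omega> \<in> ball c r" "e \<le> gap (Suc k) s \<omega> (x (Suc k) n \<omega>)"
      unfolding B_def y_def by auto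
    then show ?thesis by (rule large_gap_near_of_gap[OF s n])
  qed
  have "\<exists>k\<ge>m. large_gap_near s n c r e k \<omega>" for m
  proof -
    obtain k where "Suc m \<le> k" "k \<in> B" using B_unbounded by blast
    then show ?thesis using large[of "k - 1"] by (intro exI[of _ "k - 1"]) auto
  qed
  then have "\<exists>\<^sub>\<infinity>k. large_gap_near s n c r e k \<omega> \<and> sampled_node J (Suc k) (s - 1) \<omega> = n"
    using revisit unfolding INFM_nat_le by blast
  moreover obtain K0 where K0: "\<And>k. K0 \<le> k \<Longrightarrow> 1 \<le> k \<Longrightarrow> sampled_node J k (s - 1) \<omega> = n \<Longrightarrow>
      gap k s \<omega> (y k) < e / 2"
  proof -
    have "\<forall>\<^sub>F k in sequentially \<sqinter> principal {k. 1 \<le> k \<and> sampled_node J k (s - 1) \<omega> = n}.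
        dist (gap k s \<omega> (x k n \<omega>)) 0 < e / 2"
      using on_node e by (intro tendstoD) auto
    then show thesis using that
      unfolding eventually_inf_principal eventually_sequentially y_def by (force simp: dist_real_def)
  qed
  ultimately obtain k0 where k0: "K0 \<le> k0" "large_gap_near s n c r e k0 \<omega>"
    "sampled_node J (Suc k0) (s - 1) \<omega> = n"
    unfolding INFM_nat_le by blast
  have small: "gap (Suc k0) s \<omega> (y (Suc k0)) < e / 2" using K0 k0 by simp
  have active: "Qk (Suc k0 - 1) s \<omega> (y (Suc k0)) < Qk (Suc k0) s \<omega> (y (Suc k0))"
    using active_cut_at_revisit[OF s n k0(2)] small e unfolding y_def by simp
  obtain k2 where k2: "Suc k0 \<le> k2" "k2 \<in> B" using B_unbounded by blast
  have "dist c (y (Suc k0)) < r" "dist c (y k2) < r"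
    using k0(2) k2(2) unfolding large_gap_near_def B_def y_def by auto
  then have "dist (y (Suc k0)) (y k2) < 2 * r"
    using dist_triangle[of "y (Suc k0)" "y k2" c] by (simp add: dist_commute)
  then have "gap k2 s \<omega> (y k2) < gap (Suc k0) s \<omega> (y (Suc k0)) + e / 2"
    using k2(1) y_in k2(2) by (intro propagate[OF _ _ _ _ _ active]) (auto simp: B_def)
  moreover have "e \<le> gap k2 s \<omega> (y k2)" using k2(2) unfolding B_def by simp
  ultimately show False using small by simp
qed

lemma finite_large_gaps:
  assumes \<omega>: "samples_in_range \<omega>" and s: "s \<in> {2..T}" and n: "n \<in> tree_nodes M (s - 1)"
    and D: "\<And>U. open U \<Longrightarrow> U \<noteq> {} \<Longrightarrow> \<exists>d\<in>D. d \<in> U"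
    and revisit: "\<And>c a b. c \<in> D \<Longrightarrow> (\<exists>\<^sub>\<infinity>k. large_gap_near s n c (1 / Suc a) (1 / Suc b) k \<omega>) \<Longrightarrow>
      (\<exists>\<^sub>\<infinity>k. large_gap_near s n c (1 / Suc a) (1 / Suc b) k \<omega> \<and> sampled_node J (Suc k) (s - 1) \<omega> = n)"
    and on_node: "((\<lambda>k. gap k s \<omega> (x k n \<omega>)) \<longlongrightarrow> 0)
      (sequentially \<sqinter> principal {k. 1 \<le> k \<and> sampled_node J k (s - 1) \<omega> = n})"
  shows "finite {k. 1 \<le> k \<and> 1 / real (Suc b) \<le> gap k s \<omega> (x k n \<omega>)}"
    (is "finite ?B")
proof (rule ccontr)
  assume "infinite ?B"
  define e where "e = 1 / real (Suc b)"
  have e: "0 < e" unfolding e_def by simp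
  then have "0 < e / 2" by simp
  then obtain \<rho> where "0 < \<rho>" and propagate: "\<And>k1 k2 y1 y2. 1 \<le> k1 \<Longrightarrow> k1 \<le> k2 \<Longrightarrow>
      y1 \<in> Xs (s - 1) \<Longrightarrow> y2 \<in> Xs (s - 1) \<Longrightarrow> dist y1 y2 < \<rho> \<Longrightarrow>
      Qk (k1 - 1) s \<omega> y1 < Qk k1 s \<omega> y1 \<Longrightarrow> gap k2 s \<omega> y2 < gap k1 s \<omega> y1 + e / 2"
    by (rule gap_propagation[OF \<omega> s]) (rule that)
  obtain a where a: "1 / real (Suc a) < \<rho> / 2"
    using reals_Archimedean[of "\<rho> / 2"] \<open>0 < \<rho>\<close> by (auto simp: inverse_eq_divide)
  define r where "r = 1 / real (Suc a)"
  have "0 < r" unfolding r_def by simp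
  have compact: "compact (Xs (s - 1))" using s by (intro Xs_compact) auto
  have in_Xs: "x k n \<omega> \<in> Xs (s - 1)" if "k \<in> ?B" for k
    using that x_node_in_Xs[OF _ s n] by auto
  have "\<exists>c\<in>D. infinite {k \<in> ?B. x k n \<omega> \<in> ball c r}"
    by (rule infinite_in_some_ball[OF compact _ \<open>0 < r\<close> \<open>infinite ?B\<close> in_Xs]) (rule D)
  then obtain c where "c \<in> D" and c: "infinite {k \<in> ?B. x k n \<omega> \<in> ball c r}" ..
  have "finite {k. 1 \<le> k \<and> x k n \<omega> \<in> ball c r \<and> e \<le> gap k s \<omega> (x k n \<omega>)}"
  proof (rule finitely_many_large_gaps_near[OF s n e _ _ on_node])
    show "gap k2 s \<omega> y2 < gap k1 s \<omega> y1 + e / 2"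
      if "1 \<le> k1" "k1 \<le> k2" "y1 \<in> Xs (s - 1)" "y2 \<in> Xs (s - 1)" "dist y1 y2 < 2 * r"
        "Qk (k1 - 1) s \<omega> y1 < Qk k1 s \<omega> y1" for k1 k2 y1 y2
    proof -
      have "dist y1 y2 < \<rho>" using that(5) a unfolding r_def by linarith
      then show ?thesis by (rule propagate[OF that(1-4) _ that(6)])
    qed
    show "\<exists>\<^sub>\<infinity>k. large_gap_near s n c r e k \<omega> \<and> sampled_node J (Suc k) (s - 1) \<omega> = n"
      if "\<exists>\<^sub>\<infinity>k. large_gap_near s n c r e k \<omega>"
      using revisit[OF \<open>c \<in> D\<close>] that unfolding r_def e_def by blast
  qed
  moreover have "{k \<in> ?B. x k n \<omega> \<in> ball c r}
      = {k. 1 \<le> k \<and> x k n \<omega> \<in> ball c r \<and> e \<le> gap k s \<omega> (x k n \<omega>)}"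
    unfolding e_def by auto
  ultimately show False using c by simp
qed

lemma gap_tendsto_off_node:
  assumes \<omega>: "samples_in_range \<omega>" and s: "s \<in> {2..T}" and n: "n \<in> tree_nodes M (s - 1)"
    and D: "\<And>U. open U \<Longrightarrow> U \<noteq> {} \<Longrightarrow> \<exists>d\<in>D. d \<in> U"
    and revisit: "\<And>c a b. c \<in> D \<Longrightarrow> (\<exists>\<^sub>\<infinity>k. large_gap_near s n c (1 / Suc a) (1 / Suc b) k \<omega>) \<Longrightarrow>
      (\<exists>\<^sub>\<infinity>k. large_gap_near s n c (1 / Suc a) (1 / Suc b) k \<omega> \<and> sampled_node J (Suc k) (s - 1) \<omega> = n)"
    and on_node: "((\<lambda>k. gap k s \<omega> (x k n \<omega>)) \<longlongrightarrow> 0)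
      (sequentially \<sqinter> principal {k. 1 \<le> k \<and> sampled_node J k (s - 1) \<omega> = n})"
  shows "((\<lambda>k. gap k s \<omega> (x k n \<omega>)) \<longlongrightarrow> 0)
      (sequentially \<sqinter> principal {k. 1 \<le> k \<and> sampled_node J k (s - 1) \<omega> \<noteq> n})"
proof (rule tendstoI)
  fix \<epsilon> :: real assume "0 < \<epsilon>"
  obtain b where b: "1 / real (Suc b) < \<epsilon>"
    using reals_Archimedean[OF \<open>0 < \<epsilon>\<close>] by (auto simp: inverse_eq_divide)
  obtain K where K: "{k. 1 \<le> k \<and> 1 / real (Suc b) \<le> gap k s \<omega> (x k n \<omega>)} \<subseteq> {..<K}"
    using finite_nat_bounded[OF finite_large_gaps[OF \<omega> s n D revisit on_node]] by blast
  have "dist (gap k s \<omega> (x k n \<omega>)) 0 < \<epsilon>" if "K \<le> k" "1 \<le> k" for k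
  proof -
    have "k \<notin> {k. 1 \<le> k \<and> 1 / real (Suc b) \<le> gap k s \<omega> (x k n \<omega>)}" using K that(1) by auto
    then have "gap k s \<omega> (x k n \<omega>) < 1 / real (Suc b)" using that(2) by auto
    moreover have "0 \<le> gap k s \<omega> (x k n \<omega>)" using Qk_eq_gap(2)[OF that(2) s x_node_in_Xs[OF that(2) s n]] .
    ultimately show ?thesis using b by (simp add: dist_real_def)
  qed
  then show "\<forall>\<^sub>F k in sequentially \<sqinter> principal {k. 1 \<le> k \<and> sampled_node J k (s - 1) \<omega> \<noteq> n}.
      dist (gap k s \<omega> (x k n \<omega>)) 0 < \<epsilon>"
    unfolding eventually_inf_principal eventually_sequentially by blast
qed

lemma tendsto_Q_minus_Qk_iff_gap:
  assumes s: "s \<in> {2..T}" and n: "n \<in> tree_nodes M (s - 1)" and S: "S \<subseteq> {k. 1 \<le> k}"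
  shows "((\<lambda>k. Q s (x k n \<omega>) - Qk k s \<omega> (x k n \<omega>)) \<longlongrightarrow> 0) (sequentially \<sqinter> principal S)
    \<longleftrightarrow> ((\<lambda>k. gap k s \<omega> (x k n \<omega>)) \<longlongrightarrow> 0) (sequentially \<sqinter> principal S)"
proof -
  have "Q s (x k n \<omega>) - Qk k s \<omega> (x k n \<omega>) = ereal (gap k s \<omega> (x k n \<omega>))" if "k \<in> S" for k
  proof -
    have k: "1 \<le> k" using that S by auto
    show ?thesis by (rule Q_minus_Qk_eq_gap[OF k s x_node_in_Xs[OF k s n]])
  qed
  then have "\<forall>\<^sub>F k in sequentially \<sqinter> principal S.
      Q s (x k n \<omega>) - Qk k s \<omega> (x k n \<omega>) = ereal (gap k s \<omega> (x k n \<omega>))"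
    unfolding eventually_inf_principal by (intro always_eventually) blast
  then have "((\<lambda>k. Q s (x k n \<omega>) - Qk k s \<omega> (x k n \<omega>)) \<longlongrightarrow> ereal 0) (sequentially \<sqinter> principal S)
      \<longleftrightarrow> ((\<lambda>k. ereal (gap k s \<omega> (x k n \<omega>))) \<longlongrightarrow> ereal 0) (sequentially \<sqinter> principal S)"
    by (rule tendsto_cong)
  then show ?thesis by (simp add: zero_ereal_def lim_ereal)
qed

text \<open>Trial \<open>k\<close> is the sampling in iteration \<open>k + 1\<close>.\<close>

lemma node_trials:
  assumes s: "s \<in> {2..T}" and n: "n \<in> tree_nodes M (s - 1)"
  shows "past_determined_trials PS (\<lambda>k. samples_agree J T (Suc k))
    (\<lambda>k \<omega>. sampled_node J (Suc k) (s - 1) \<omega> = n) (node_prob n)"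
proof -
  have len: "length n + 1 = s - 1" "length n < T" "set n \<subseteq> {..<M}"
    using n s by (auto simp: tree_nodes_def)
  show ?thesis
  proof (intro past_determined_trials.intro past_determined_trials_axioms.intro)
    show "prob_space PS" by unfold_locales
    show "samples_agree J T (Suc k) \<omega> \<omega>'" if "samples_agree J T (Suc (Suc k)) \<omega> \<omega>'" for k \<omega> \<omega>'
      using that by (rule samples_agree_mono) simp
    show "{\<omega> \<in> space PS. P \<omega>} \<in> events"
      if "\<And>\<omega> \<omega>'. samples_agree J T (Suc k) \<omega> \<omega>' \<Longrightarrow> P \<omega> = P \<omega>'" for k P
      using that by (rule determined_event)
    show "(sampled_node J (Suc k) (s - 1) \<omega> = n) = (sampled_node J (Suc k) (s - 1) \<omega>' = n)"
      if "samples_agree J T (Suc (Suc k)) \<omega> \<omega>'" for k \<omega> \<omega>'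
    proof -
      have sT: "s - 1 \<le> T" using s by auto
      show ?thesis using sampled_node_agree[OF that _ sT] by simp
    qed
    show "prob {\<omega> \<in> space PS. P \<omega> \<and> sampled_node J (Suc k) (s - 1) \<omega> = n}
        = node_prob n * prob {\<omega> \<in> space PS. P \<omega>}"
      if "\<And>\<omega> \<omega>'. samples_agree J T (Suc k) \<omega> \<omega>' \<Longrightarrow> P \<omega> = P \<omega>'" for k P
      using prob_sampled_node[OF _ len(2,3) that] len(1) by (simp add: mult.commute)
    show "0 < node_prob n" by (rule node_prob_pos[OF len(2,3)])
  qed
qed

theorem AE_gap_tendsto_off_node:
  assumes s: "t \<in> {2..T}" and n: "n \<in> tree_nodes M (t - 1)"
    and on_node: "AE \<omega> in PS. ((\<lambda>k. Q t (x k n \<omega>) - Qk k t \<omega> (x k n \<omega>)) \<longlongrightarrow> 0)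
      (sequentially \<sqinter> principal {k. 1 \<le> k \<and> sampled_node J k (t - 1) \<omega> = n})"
  shows "AE \<omega> in PS. ((\<lambda>k. Q t (x k n \<omega>) - Qk k t \<omega> (x k n \<omega>)) \<longlongrightarrow> 0)
      (sequentially \<sqinter> principal {k. 1 \<le> k \<and> sampled_node J k (t - 1) \<omega> \<noteq> n})"
proof -
  obtain D :: "'a set" where "countable D" and D: "\<And>U. open U \<Longrightarrow> U \<noteq> {} \<Longrightarrow> \<exists>d\<in>D. d \<in> U"
    using countable_dense_exists by blast
  interpret trials: past_determined_trials PS "\<lambda>k. samples_agree J T (Suc k)"
    "\<lambda>k \<omega>. sampled_node J (Suc k) (t - 1) \<omega> = n" "node_prob n"
    by (rule node_trials[OF s n])
  have "AE \<omega> in PS. (\<exists>\<^sub>\<infinity>k. large_gap_near t n c r e k \<omega>) \<longrightarrow>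
      (\<exists>\<^sub>\<infinity>k. large_gap_near t n c r e k \<omega> \<and> sampled_node J (Suc k) (t - 1) \<omega> = n)" for c r e
    by (rule trials.AE_frequently_success) (rule large_gap_near_determined[OF _ s])
  then have "AE \<omega> in PS. \<forall>(c, a, b) \<in> D \<times> UNIV \<times> UNIV.
      (\<exists>\<^sub>\<infinity>k. large_gap_near t n c (1 / Suc a) (1 / Suc b) k \<omega>) \<longrightarrow>
      (\<exists>\<^sub>\<infinity>k. large_gap_near t n c (1 / Suc a) (1 / Suc b) k \<omega> \<and> sampled_node J (Suc k) (t - 1) \<omega> = n)"
    using \<open>countable D\<close> by (subst AE_ball_countable) auto
  then show ?thesis using AE_samples_in_range on_node
  proof eventually_elim
    case (elim \<omega>)
    have S: "{k. 1 \<le> k \<and> sampled_node J k (t - 1) \<omega> = n} \<subseteq> {k. 1 \<le> k}"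
      "{k. 1 \<le> k \<and> sampled_node J k (t - 1) \<omega> \<noteq> n} \<subseteq> {k. 1 \<le> k}" by auto
    have "((\<lambda>k. gap k t \<omega> (x k n \<omega>)) \<longlongrightarrow> 0)
        (sequentially \<sqinter> principal {k. 1 \<le> k \<and> sampled_node J k (t - 1) \<omega> \<noteq> n})"
    proof (rule gap_tendsto_off_node[OF elim(2) s n D])
      show "\<exists>\<^sub>\<infinity>k. large_gap_near t n c (1 / Suc a) (1 / Suc b) k \<omega> \<and> sampled_node J (Suc k) (t - 1) \<omega> = n"
        if "c \<in> D" "\<exists>\<^sub>\<infinity>k. large_gap_near t n c (1 / Suc a) (1 / Suc b) k \<omega>" for c a b
        using elim(1) that by blast
      show "((\<lambda>k. gap k t \<omega> (x k n \<omega>)) \<longlongrightarrow> 0)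
          (sequentially \<sqinter> principal {k. 1 \<le> k \<and> sampled_node J k (t - 1) \<omega> = n})"
        using elim(3) tendsto_Q_minus_Qk_iff_gap[OF s n S(1)] by blast
    qed
    then show ?case using tendsto_Q_minus_Qk_iff_gap[OF s n S(2)] by blast
  qed
qed

end

theorem mainTheorem6:
  fixes T M :: nat
    and x0 :: "'a::euclidean_space"
    and Xs :: "nat \<Rightarrow> 'a set"
    and xi1 :: "'xi::euclidean_space"
    and xi :: "nat \<Rightarrow> nat \<Rightarrow> 'xi"
    and p :: "nat \<Rightarrow> nat \<Rightarrow> real"
    and f :: "nat \<Rightarrow> 'a \<Rightarrow> 'a \<Rightarrow> 'xi \<Rightarrow> ereal"
    and g :: "nat \<Rightarrow> nat \<Rightarrow> 'a \<Rightarrow> 'a \<Rightarrow> 'xi \<Rightarrow> real"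
    and ng nr :: "nat \<Rightarrow> nat"
    and Ar Br :: "nat \<Rightarrow> nat \<Rightarrow> 'xi \<Rightarrow> 'a"
    and bv :: "nat \<Rightarrow> nat \<Rightarrow> 'xi \<Rightarrow> real"
    and Xf :: "nat \<Rightarrow> 'a \<Rightarrow> 'xi \<Rightarrow> 'a set"
    and Q Q0 :: "nat \<Rightarrow> 'a \<Rightarrow> ereal"
    and lam :: "nat \<Rightarrow> nat \<Rightarrow> real"
    and PS :: "'w measure"
    and J :: "nat \<Rightarrow> nat \<Rightarrow> 'w \<Rightarrow> nat"
    and xP :: "nat \<Rightarrow> nat \<Rightarrow> 'w \<Rightarrow> 'a"
    and x :: "nat \<Rightarrow> nat list \<Rightarrow> 'w \<Rightarrow> 'a"
    and Qk :: "nat \<Rightarrow> nat \<Rightarrow> 'w \<Rightarrow> 'a \<Rightarrow> ereal"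
    and pi :: "nat \<Rightarrow> nat \<Rightarrow> nat \<Rightarrow> 'w \<Rightarrow> 'a"
    and t :: nat and n :: "nat list"
  \<comment> \<open>(H1): finite supports, probabilities of the realizations\<close>
  assumes p_pos: "\<forall>s\<in>{2..T}. \<forall>j<M. p s j > 0"
    and p_sum: "\<forall>s\<in>{2..T}. (\<Sum>j<M. p s j) = 1"
    and xi_distinct: "\<forall>s\<in>{2..T}. inj_on (xi s) {..<M}"
  \<comment> \<open>the entries of (b_t, A_t, B_t) are components of xi_t\<close>
    and A_comp: "\<forall>s\<in>{1..T}. \<forall>i<nr s. \<forall>e\<in>Basis. \<exists>l\<in>Basis. \<forall>\<xi>. Ar s i \<xi> \<bullet> e = \<xi> \<bullet> l"
    and B_comp: "\<forall>s\<in>{1..T}. \<forall>i<nr s. \<forall>e\<in>Basis. \<exists>l\<in>Basis. \<forall>\<xi>. Br s i \<xi> \<bullet> e = \<xi> \<bullet> l"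
    and b_comp: "\<forall>s\<in>{1..T}. \<forall>i<nr s. \<exists>l\<in>Basis. \<forall>\<xi>. bv s i \<xi> = \<xi> \<bullet> l"
    and Xf_def: "Xf = feas Xs g ng Ar Br bv nr"
    and X0: "Xs 0 = {x0}"
  \<comment> \<open>(H2)\<close>
    and H2_1: "\<forall>s\<in>{1..T}. Xs s \<noteq> {} \<and> convex (Xs s) \<and> compact (Xs s)"
    and H2_2a: "\<forall>s\<in>{1..T}. \<forall>y z. (\<lambda>\<xi>. f s y z \<xi>) \<in> borel_measurable borel"
    and H2_2b: "\<forall>s\<in>{1..T}. \<forall>\<xi>\<in>Theta xi1 xi M s.
          proper_ef (\<lambda>(y, z). f s y z \<xi>) \<and> convex_ef (\<lambda>(y, z). f s y z \<xi>)
          \<and> lsc_ef (\<lambda>(y, z). f s y z \<xi>)"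
    and H2_3: "\<forall>s\<in>{1..T}. \<forall>\<xi>\<in>Theta xi1 xi M s. \<forall>i<ng s.
          convex_on UNIV (\<lambda>(y, z). g s i y z \<xi>) \<and> lsc_ef (\<lambda>(y, z). ereal (g s i y z \<xi>))"
    and H2_4: "\<forall>s\<in>{1..T}. \<exists>\<epsilon>>0. \<forall>\<xi>\<in>Theta xi1 xi M s.
          fatten (Xs (s - 1)) \<epsilon> \<times> Xs s \<subseteq> edom (\<lambda>(y, z). f s y z \<xi>)
          \<and> (\<forall>y\<in>fatten (Xs (s - 1)) \<epsilon>. Xf s y \<xi> \<noteq> {})"
    and H2_5: "\<forall>s\<in>{2..T}. \<forall>\<xi>\<in>Theta xi1 xi M s. \<exists>yb xb.
          (yb, xb) \<in> (Xs (s - 1) \<times> rel_interior (Xs s))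
                      \<inter> rel_interior {(y, z). \<forall>i<ng s. g s i y z \<xi> \<le> 0}
          \<and> xb \<in> Xf s yb \<xi>"
    and Q_last: "\<forall>y. Q (Suc T) y = 0"
    and Q_rec: "\<forall>s\<in>{2..T}. \<forall>y. Q s y = (\<Sum>j<M. ereal (p s j) * Qinf f Xf (Q (Suc s)) s y (xi s j))"
    and lam_nonneg: "\<forall>s k. lam s k \<ge> 0"
    and lam_first: "\<forall>s. lam s 1 = 0"
    and lam_last: "\<forall>k. lam T k = 0"
    and lam_lim: "\<forall>s\<in>{1..<T}. (lam s \<longlonglongrightarrow> 0)"
    and prox_in: "\<forall>s\<in>{1..T}. \<forall>k\<ge>1. \<forall>\<omega>. xP s k \<omega> \<in> Xs s"
    and Q_init: "\<forall>s\<in>{2..T}. \<forall>\<omega>. Qk 0 s \<omega> = Q0 s"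
    and Q0_le: "\<forall>s\<in>{2..T}. \<forall>y. Q0 s y \<le> Q s y"
    and Qk_last: "\<forall>k \<omega>. Qk k (Suc T) \<omega> = (\<lambda>_. 0)"
  \<comment> \<open>(H3): sampling in the backward passes\<close>
    and PS: "prob_space PS"
    and J_meas: "\<forall>k\<ge>1. \<forall>s\<in>{2..T}. J k s \<in> measurable PS (count_space UNIV)"
    and J_dist: "\<forall>k\<ge>1. \<forall>s\<in>{2..T}. \<forall>j<M. measure PS {\<omega> \<in> space PS. J k s \<omega> = j} = p s j"
    and J_indep: "\<forall>k\<ge>1. \<forall>s\<in>{2..T}. prob_space.indep_set PS
          (sigma_sets (space PS) {J k s -` {j} \<inter> space PS | j. True})
          (sigma_sets (space PS) {J k' s' -` {j} \<inter> space PS | j k' s'.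
              (1 \<le> k' \<and> k' < k \<and> s' \<in> {2..T}) \<or> (k' = k \<and> s' \<in> {2..<s})})"
    and forward: "\<forall>k\<ge>1. \<forall>\<omega>. \<forall>m. length m < T \<and> set m \<subseteq> {..<M} \<longrightarrow>
          (let s = length m + 1; \<xi> = node_xi xi1 xi m;
               xpar = (if m = [] then x0 else x k (butlast m) \<omega>)
           in is_arg_min
                (\<lambda>z. f s xpar z \<xi> + Qk (k - 1) (Suc s) \<omega> z
                      + ereal (lam s k * (norm (z - xP s k \<omega>))\<^sup>2))
                (\<lambda>z. z \<in> Xf s xpar \<xi>) (x k m \<omega>))"
    and backward: "\<forall>k\<ge>1. \<forall>\<omega>. \<forall>s\<in>{2..T}.
          (let xn = x k (sampled_node J k (s - 1) \<omega>) \<omega>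
           in (\<forall>j<M. is_subgrad (\<lambda>z. Qinf f Xf (Qk k (Suc s) \<omega>) s z (xi s j)) xn (pi k s j \<omega>))
              \<and> Qk k s \<omega> = (\<lambda>y. max (Qk (k - 1) s \<omega> y)
                   ((\<Sum>j<M. ereal (p s j) * Qinf f Xf (Qk k (Suc s) \<omega>) s xn (xi s j))
                    + ereal ((\<Sum>j<M. p s j *\<^sub>R pi k s j \<omega>) \<bullet> (y - xn)))))"
  \<comment> \<open>the algorithm's choices are non-anticipative (deterministic rules applied to past samples)\<close>
    and x_adapted: "\<forall>k\<ge>1. \<forall>\<omega> \<omega>'. samples_agree J T k \<omega> \<omega>' \<longrightarrow>
          (\<forall>m. x k m \<omega> = x k m \<omega>') \<and> (\<forall>s. xP s k \<omega> = xP s k \<omega>')"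
    and pi_adapted: "\<forall>k\<ge>1. \<forall>\<omega> \<omega>'. samples_agree J T (Suc k) \<omega> \<omega>' \<longrightarrow>
          (\<forall>s j. pi k s j \<omega> = pi k s j \<omega>')"
    and t_range: "t \<in> {2..T}"
    and n_node: "n \<in> tree_nodes M (t - 1)"
    and lim_in: "AE \<omega> in PS. ((\<lambda>k. Q t (x k n \<omega>) - Qk k t \<omega> (x k n \<omega>)) \<longlongrightarrow> 0)
                   (sequentially \<sqinter> principal {k. 1 \<le> k \<and> sampled_node J k (t - 1) \<omega> = n})"
  shows "AE \<omega> in PS. ((\<lambda>k. Q t (x k n \<omega>) - Qk k t \<omega> (x k n \<omega>)) \<longlongrightarrow> 0)
                   (sequentially \<sqinter> principal {k. 1 \<le> k \<and> sampled_node J k (t - 1) \<omega> \<noteq> n})"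
proof -
  have Theta: "xi s j \<in> Theta xi1 xi M s" if "s \<in> {2..T}" "j < M" for s j
    using that by (auto simp: Theta_def)
  have f_proper_convex: "proper_ef (\<lambda>(y, z). f s y z (xi s j)) \<and> convex_ef (\<lambda>(y, z). f s y z (xi s j))"
    if "s \<in> {2..T}" "j < M" for s j
  proof -
    have "s \<in> {1..T}" using that by auto
    then show ?thesis using H2_2b Theta[OF that] by blast
  qed
  have f_neq_MInfty: "f s y z (xi s j) \<noteq> -\<infinity>" if "s \<in> {2..T}" "j < M" for s j y z
    using f_proper_convex[OF that] unfolding proper_ef_def by (metis case_prod_conv)
  have Xf_subset: "Xf s y \<xi> \<subseteq> Xs s" for s y \<xi>
    unfolding Xf_def feas_def by auto
  have Xf_graph_convex: "convex {(y, z). z \<in> Xf s y (xi s j)}" if "s \<in> {2..T}" "j < M" for s j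
  proof -
    have s: "s \<in> {1..T}" using that by auto
    have "convex_on UNIV (\<lambda>(y, z). g s i y z (xi s j))" if "i < ng s" for i
      using H2_3 s Theta[OF \<open>s \<in> {2..T}\<close> \<open>j < M\<close>] that by blast
    moreover have "convex (Xs s)" using H2_1 s by blast
    ultimately show ?thesis unfolding Xf_def by (intro convex_feas_graph)
  qed
  have f_finite_near: "\<exists>\<epsilon>>0. \<forall>j<M. \<forall>y\<in>fatten (Xs (s - 1)) \<epsilon>.
      Xf s y (xi s j) \<noteq> {} \<and> (\<forall>z\<in>Xs s. f s y z (xi s j) < \<infinity>)" if "s \<in> {2..T}" for s
  proof -
    have "s \<in> {1..T}" using that by auto
    then obtain \<epsilon> where "\<epsilon> > 0" and \<epsilon>: "\<forall>\<xi>\<in>Theta xi1 xi M s.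
        fatten (Xs (s - 1)) \<epsilon> \<times> Xs s \<subseteq> edom (\<lambda>(y, z). f s y z \<xi>)
        \<and> (\<forall>y\<in>fatten (Xs (s - 1)) \<epsilon>. Xf s y \<xi> \<noteq> {})"
      using H2_4 by blast
    have fin: "Xf s y (xi s j) \<noteq> {} \<and> (\<forall>z\<in>Xs s. f s y z (xi s j) < \<infinity>)"
      if "j < M" "y \<in> fatten (Xs (s - 1)) \<epsilon>" for j y
    proof -
      have "fatten (Xs (s - 1)) \<epsilon> \<times> Xs s \<subseteq> edom (\<lambda>(y, z). f s y z (xi s j))
          \<and> (\<forall>y\<in>fatten (Xs (s - 1)) \<epsilon>. Xf s y (xi s j) \<noteq> {})"
        using bspec[OF \<epsilon> Theta[OF \<open>s \<in> {2..T}\<close> that(1)]] .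
      then show ?thesis using that(2) unfolding edom_def by auto
    qed
    show ?thesis using \<open>\<epsilon> > 0\<close> fin by auto
  qed
  have x_in_Xs: "x k m \<omega> \<in> Xs (length m + 1)" if "1 \<le> k" "length m < T" "set m \<subseteq> {..<M}" for k m \<omega>
  proof -
    have "let s = length m + 1; \<xi> = node_xi xi1 xi m; xpar = (if m = [] then x0 else x k (butlast m) \<omega>)
      in is_arg_min (\<lambda>z. f s xpar z \<xi> + Qk (k - 1) (Suc s) \<omega> z + ereal (lam s k * (norm (z - xP s k \<omega>))\<^sup>2))
        (\<lambda>z. z \<in> Xf s xpar \<xi>) (x k m \<omega>)"
      using forward that by blast
    then have "\<exists>xpar \<xi>. x k m \<omega> \<in> Xf (length m + 1) xpar \<xi>"
      unfolding Let_def is_arg_min_def by blast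
    then show ?thesis using Xf_subset by blast
  qed
  have Xs_convex: "convex (Xs s)" and Xs_compact: "compact (Xs s)" if "s \<in> {1..T}" for s
    using H2_1 that by auto
  have f_convex: "convex_ef (\<lambda>(y, z). f s y z (xi s j))" if "s \<in> {2..T}" "j < M" for s j
    using f_proper_convex[OF that] by blast
  have Qk_last': "Qk k (Suc T) \<omega> y = 0" for k \<omega> y
    using Qk_last by simp
  have x_adapted': "x k m \<omega> = x k m \<omega>'" if "1 \<le> k" "samples_agree J T k \<omega> \<omega>'" for k m \<omega> \<omega>'
    using x_adapted that by blast
  interpret sreda PS T M p xi Xs f Xf Q Q0 J x Qk pi
    by (intro sreda.intro sreda_axioms.intro;
        rule PS p_pos[rule_format] p_sum[rule_format] Xs_convex Xs_compact f_neq_MInfty f_convex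
          Xf_subset Xf_graph_convex f_finite_near Q_last[rule_format] Q_rec[rule_format]
          Q_init[rule_format] Q0_le[rule_format] Qk_last' J_meas[rule_format] J_dist[rule_format]
          J_indep[rule_format] x_in_Xs backward[rule_format] x_adapted' pi_adapted[rule_format];
        assumption)
  show ?thesis by (rule AE_gap_tendsto_off_node[OF t_range n_node lim_in])
qed

end
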